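(* For every $\lambda \in (0,1/2)$ and every $\delta > 0$ there exist positive constants $\gamma = \gamma(\lambda,\delta)$, $\tau = \tau(\lambda,\delta)$ and an integer $n_0 = n_0(\lambda,\delta)$ such that the following holds. Let $p \in (\lambda, 1-\lambda)$, let $n \geq n_0$, and let $f : \{0,1\}^{2n} \to \{0,1\}$ be a function with total influence $\mathbf{I}^{(p)}[f] \leq \gamma \cdot n$. Suppose $i \in [2n]$ satisfies $\mathrm{Inf}^{(p)}[f, i] \geq \delta$. Then \[ \Pr_{\pi}\Big[\mathrm{Inf}^{(p)}[f^\pi, \pi(i)] \geq \tau\Big] \geq \tau, \] where $\pi : [2n] \to [n]$ is a uniformly random $2$-to-$1$ map.
   Context: For $p \in (0,1)$, $\mu_{p,n}$ denotes the product $p$-biased distribution on $\{0,1\}^n$, in which each coordinate is $1$ independently with probability $p$. For $x \in \{0,1\}^n$, $i\in[n]$ and $s \in \{0,1\}$, $x^{i \to s}$ is $x$ with its $i$-th coordinate set to $s$. For $f : \{0,1\}^n \to \mathbb{R}$, the influence of coordinate $i$ is $\mathrm{Inf}^{(p)}[f,i] = \mathbb{E}_{x \sim \mu_{p,n}}\big[(f(x) - \mathbb{E}_{s \sim \mu_{p,1}}[f(x^{i\to s})])^2\big]$; for Boolean-valued $f$ this equals $p(1-p)\Pr_{x\sim\mu_{p,n}}[f(x)\neq f(x\oplus i)]$, where $x\oplus i$ is $x$ with the $i$-th bit flipped. The total influence is $\mathbf{I}^{(p)}[f] = \sum_{i=1}^n \mathrm{Inf}^{(p)}[f,i]$. A map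 $\pi:[2n]\to[n]$ is $2$-to-$1$ if every element of $[n]$ has exactly two preimages. For $\pi : [m] \to [k]$ and $f:\{0,1\}^m\to\{0,1\}$, the minor $f^\pi : \{0,1\}^k \to \{0,1\}$ is $f^\pi(y) = f(y_{\pi(1)}, \dots, y_{\pi(m)})$. *)

theory Defs
  imports "HOL-Analysis.Analysis"
begin

text \<open>Points of the cube {0,1}^m are functions nat => bool that vanish (are False)
  at every coordinate j >= m; coordinates are indexed 0..m-1.\<close>
definition cube :: "nat \<Rightarrow> (nat \<Rightarrow> bool) set" where
  "cube m = {x. \<forall>j. m \<le> j \<longrightarrow> \<not> x j}"

definition mu :: "real \<Rightarrow> nat \<Rightarrow> (nat \<Rightarrow> bool) \<Rightarrow> real" where
  "mu p m x = (\<Prod>j<m. if x j then p else 1 - p)"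

definition influence :: "real \<Rightarrow> nat \<Rightarrow> ((nat \<Rightarrow> bool) \<Rightarrow> real) \<Rightarrow> nat \<Rightarrow> real" where
  "influence p m g i =
     (\<Sum>x\<in>cube m. mu p m x *
        (g x - (p * g (x(i := True)) + (1 - p) * g (x(i := False))))^2)"

definition total_influence :: "real \<Rightarrow> nat \<Rightarrow> ((nat \<Rightarrow> bool) \<Rightarrow> real) \<Rightarrow> real" where
  "total_influence p m g = (\<Sum>i<m. influence p m g i)"

definition bval :: "((nat \<Rightarrow> bool) \<Rightarrow> bool) \<Rightarrow> (nat \<Rightarrow> bool) \<Rightarrow> real" where
  "bval f x = (if f x then 1 else 0)"

definition two_to_one_maps :: "nat \<Rightarrow> (nat \<Rightarrow> nat) set" where
  "two_to_one_maps n = {\<pi> \<in> {0..<2*n} \<rightarrow>\<^sub>E {0..<n}.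
      \<forall>k<n. card {j\<in>{0..<2*n}. \<pi> j = k} = 2}"

definition minor :: "nat \<Rightarrow> ((nat \<Rightarrow> bool) \<Rightarrow> bool) \<Rightarrow> (nat \<Rightarrow> nat) \<Rightarrow> (nat \<Rightarrow> bool) \<Rightarrow> bool" where
  "minor m f \<pi> y = f (\<lambda>j. if j < m then y (\<pi> j) else False)"

end

theory Submission
  imports Defs
begin

text \<open>
  Draw \<open>\<pi>\<close> uniformly among the 2-to-1 maps and \<open>y\<close> from \<open>\<mu>\<^sub>p\<^sub>,\<^sub>n\<close>. The point
  \<open>x = y \<circ> \<pi>\<close> of the \<open>2n\<close>-cube has even weight, and the number of maps compatible with \<open>x\<close>
  depends only on its weight; so the law of \<open>x\<close> has density
  \<open>g(k) = C(n,k) / (C(2n,2k) p\<^sup>k (1-p)\<^sup>n\<^sup>-\<^sup>k)\<close> with respect to \<open>\<mu>\<^sub>p\<^sub>,\<^sub>2\<^sub>n\<close> at points of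
  weight \<open>2k\<close>. The ratio \<open>g(k+1)/g(k)\<close> is explicit: \<open>g\<close> is smallest near \<open>k = np\<close> and changes by
  at most a constant factor on a window \<open>|k - np| = O(sqrt n)\<close>, which carries most of the mass by
  Chebyshev. Hence the law of \<open>x\<close> is comparable to \<open>\<mu>\<^sub>p\<^sub>,\<^sub>2\<^sub>n\<close> on even points, and even points
  carry a \<open>\<lambda>\<close>-fraction of any flip-invariant mass.

  Flipping coordinate \<open>\<pi>(i)\<close> of \<open>y\<close> flips coordinate \<open>i\<close> of \<open>x\<close> and its partner \<open>j\<close>, the other
  preimage of \<open>\<pi>(i)\<close>; given \<open>x\<close>, the partner is uniform among the at least \<open>\<lambda>n\<close> coordinates
  \<open>j \<noteq> i\<close> with \<open>x\<^sub>j = x\<^sub>i\<close>. So \<open>Inf[f\<^sup>\<pi>, \<pi>(i)]\<close> is at least \<open>\<lambda>\<^sup>2\<close> times the probability that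
  \<open>i\<close> is pivotal for \<open>f\<close> at \<open>x\<close>, which is \<open>\<Omega>(Inf[f, i])\<close>, minus the probability that the partner
  is pivotal at \<open>x\<close> with \<open>i\<close> flipped, which is \<open>O(I[f] / n) = O(\<gamma>)\<close>. Thus the average of
  \<open>Inf[f\<^sup>\<pi>, \<pi>(i)]\<close> over \<open>\<pi>\<close> is at least \<open>2\<tau>\<close>, and as influences are at most 1, a
  \<open>\<tau>\<close>-fraction of the maps have \<open>Inf[f\<^sup>\<pi>, \<pi>(i)] \<ge> \<tau>\<close>.
\<close>

section \<open>The cube and the biased measure\<close>

definition weight :: "(nat \<Rightarrow> bool) \<Rightarrow> nat" where
  "weight x = card {j. x j}"

definition flip :: "(nat \<Rightarrow> bool) \<Rightarrow> nat \<Rightarrow> nat \<Rightarrow> bool" where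
  "flip x j = x(j := \<not> x j)"

lemma cube_0: "cube 0 = {\<lambda>_. False}"
  by (auto simp: cube_def)

lemma cube_Suc: "cube (Suc m) = cube m \<union> (\<lambda>x. x(m := True)) ` cube m"
proof (intro set_eqI iffI)
  fix x assume x: "x \<in> cube (Suc m)"
  show "x \<in> cube m \<union> (\<lambda>x. x(m := True)) ` cube m"
  proof (cases "x m")
    case True
    then have "x = (x(m := False))(m := True)"
      by (simp add: fun_upd_idem)
    moreover have "x(m := False) \<in> cube m"
      using x by (auto simp: cube_def)
    ultimately show ?thesis by blast
  next
    case False
    have "\<not> x j" if "m \<le> j" for j
      using x False that by (cases "j = m") (auto simp: cube_def)
    then show ?thesis by (simp add: cube_def)
  qed
qed (auto simp: cube_def)

lemma finite_cube: "finite (cube m)"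
  by (induction m) (simp_all add: cube_0 cube_Suc)

lemma cube_outside: "x \<in> cube m \<Longrightarrow> m \<le> j \<Longrightarrow> \<not> x j"
  by (simp add: cube_def)

lemma cube_ones_subset: "x \<in> cube m \<Longrightarrow> {j. x j} \<subseteq> {..<m}"
  by (auto simp: cube_def not_le[symmetric])

lemma finite_ones: "x \<in> cube m \<Longrightarrow> finite {j. x j}"
  using cube_ones_subset finite_subset by blast

lemma weight_le: "x \<in> cube m \<Longrightarrow> weight x \<le> m"
  unfolding weight_def using card_mono[OF _ cube_ones_subset] by fastforce

lemma weight_upd_dim: "x \<in> cube m \<Longrightarrow> weight (x(m := True)) = Suc (weight x)"
proof -
  assume x: "x \<in> cube m"
  have "{j. (x(m := True)) j} = insert m {j. x j}" by auto
  then show ?thesis using finite_ones[OF x] cube_outside[OF x] by (simp add: weight_def)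
qed

lemma sum_cube_Suc:
  fixes \<phi> :: "(nat \<Rightarrow> bool) \<Rightarrow> real"
  shows "(\<Sum>x\<in>cube (Suc m). \<phi> x) = (\<Sum>x\<in>cube m. \<phi> x + \<phi> (x(m := True)))"
proof -
  have inj: "inj_on (\<lambda>x. x(m := True)) (cube m)"
  proof (rule inj_onI)
    fix x y assume "x \<in> cube m" "y \<in> cube m" and eq: "x(m := True) = y(m := True)"
    then have "x m = y m" by (simp add: cube_outside)
    show "x = y"
    proof
      fix j show "x j = y j" using fun_cong[OF eq, of j] \<open>x m = y m\<close> by (cases "j = m") auto
    qed
  qed
  have "cube m \<inter> (\<lambda>x. x(m := True)) ` cube m = {}"
    by (auto simp: cube_def)
  then have "(\<Sum>x\<in>cube (Suc m). \<phi> x)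
      = (\<Sum>x\<in>cube m. \<phi> x) + (\<Sum>x\<in>(\<lambda>x. x(m := True)) ` cube m. \<phi> x)"
    unfolding cube_Suc by (intro sum.union_disjoint) (simp_all add: finite_cube)
  also have "(\<Sum>x\<in>(\<lambda>x. x(m := True)) ` cube m. \<phi> x) = (\<Sum>x\<in>cube m. \<phi> (x(m := True)))"
    using sum.reindex[OF inj] by simp
  finally show ?thesis by (simp add: sum.distrib)
qed

lemma mu_Suc: "x \<in> cube m \<Longrightarrow> mu p (Suc m) x = (1 - p) * mu p m x"
  by (simp add: mu_def cube_outside)

lemma mu_Suc_upd: "x \<in> cube m \<Longrightarrow> mu p (Suc m) (x(m := True)) = p * mu p m x"
proof -
  have "(\<Prod>j<m. if (x(m := True)) j then p else 1 - p) = (\<Prod>j<m. if x j then p else 1 - p)"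
    by (rule prod.cong) auto
  then show ?thesis by (simp add: mu_def mult.commute)
qed

lemma mu_nonneg: "0 \<le> p \<Longrightarrow> p \<le> 1 \<Longrightarrow> 0 \<le> mu p m x"
  by (auto simp: mu_def intro!: prod_nonneg)

lemma mu_weight: "x \<in> cube m \<Longrightarrow> mu p m x = p ^ weight x * (1 - p) ^ (m - weight x)"
proof -
  assume x: "x \<in> cube m"
  have "mu p m x = (\<Prod>j\<in>{..<m} \<inter> {j. x j}. p) * (\<Prod>j\<in>{..<m} - {j. x j}. 1 - p)"
    unfolding mu_def by (subst prod.If_cases) (simp_all add: Diff_eq)
  moreover have "{..<m} \<inter> {j. x j} = {j. x j}" using cube_ones_subset[OF x] by blast
  ultimately show ?thesis
    using cube_ones_subset[OF x] finite_ones[OF x] by (simp add: card_Diff_subset weight_def)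
qed

lemma sum_mu: "(\<Sum>x\<in>cube m. mu p m x) = 1"
proof (induction m)
  case (Suc m)
  then show ?case by (simp add: sum_cube_Suc mu_Suc mu_Suc_upd algebra_simps)
qed (simp add: cube_0 mu_def)

lemma sum_mu_weight_variance:
  "(\<Sum>x\<in>cube m. mu p m x * (real (weight x) - real m * p)^2) = real m * p * (1 - p)"
proof (induction m)
  case (Suc m)
  have pair: "(1 - p) * M * (d - p)^2 + p * M * (d + 1 - p)^2 = M * d^2 + p * (1 - p) * M"
    for d M :: real
    by (simp add: power2_eq_square algebra_simps)
  have "(\<Sum>x\<in>cube (Suc m). mu p (Suc m) x * (real (weight x) - real (Suc m) * p)^2)
      = (\<Sum>x\<in>cube m. mu p m x * (real (weight x) - real m * p)^2 + p * (1 - p) * mu p m x)"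
    (is "_ = ?rhs")
  proof (rule trans[OF sum_cube_Suc sum.cong[OF refl]])
    fix x assume x: "x \<in> cube m"
    define d where "d = real (weight x) - real m * p"
    have "real (weight x) - real (Suc m) * p = d - p"
      "real (weight (x(m := True))) - real (Suc m) * p = d + 1 - p"
      using weight_upd_dim[OF x] by (simp_all add: d_def algebra_simps)
    then show "mu p (Suc m) x * (real (weight x) - real (Suc m) * p)^2
        + mu p (Suc m) (x(m := True)) * (real (weight (x(m := True))) - real (Suc m) * p)^2
      = mu p m x * (real (weight x) - real m * p)^2 + p * (1 - p) * mu p m x"
      unfolding mu_Suc[OF x] mu_Suc_upd[OF x] d_def[symmetric] by (simp only: pair)
  qed
  also have "?rhs = (\<Sum>x\<in>cube m. mu p m x * (real (weight x) - real m * p)^2)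
      + p * (1 - p) * (\<Sum>x\<in>cube m. mu p m x)"
    by (simp only: sum.distrib sum_distrib_left)
  finally show ?case
    unfolding Suc.IH sum_mu by (simp add: algebra_simps)
qed (simp add: cube_0 mu_def weight_def)

lemma chebyshev_weight:
  assumes "0 \<le> p" "p \<le> 1" "0 < L"
  shows "(\<Sum>x\<in>cube m. mu p m x * of_bool (L < \<bar>real (weight x) - real m * p\<bar>))
    \<le> real m / (4 * L^2)"
proof -
  have "(\<Sum>x\<in>cube m. mu p m x * of_bool (L < \<bar>real (weight x) - real m * p\<bar>))
      \<le> (\<Sum>x\<in>cube m. mu p m x * ((real (weight x) - real m * p)^2 / L^2))"
  proof (intro sum_mono mult_left_mono)
    fix d :: real
    show "of_bool (L < \<bar>d\<bar>) \<le> d^2 / L^2"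
    proof (cases "L < \<bar>d\<bar>")
      case True
      then have "L^2 \<le> \<bar>d\<bar>^2" using assms(3) by (intro power_mono) auto
      then show ?thesis using assms(3) by simp
    qed simp
  qed (simp add: mu_nonneg assms)
  also have "\<dots> = real m * (p * (1 - p)) / L^2"
    by (simp add: sum_mu_weight_variance mult.assoc flip: sum_divide_distrib)
  also have "\<dots> \<le> real m * (1/4) / L^2"
  proof (intro divide_right_mono mult_left_mono)
    have "0 \<le> (2 * p - 1)^2" by simp
    then show "p * (1 - p) \<le> 1/4" by (simp add: power2_eq_square algebra_simps)
  qed simp_all
  finally show ?thesis by simp
qed

section \<open>Flips and influences\<close>

lemma flip_in_cube: "x \<in> cube m \<Longrightarrow> j < m \<Longrightarrow> flip x j \<in> cube m"
  by (auto simp: cube_def flip_def)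

lemma flip_flip [simp]: "flip (flip x j) j = x"
  by (auto simp: flip_def)

lemma flip_same [simp]: "flip x j j = (\<not> x j)"
  by (simp add: flip_def)

lemma mu_flip:
  assumes "j < m"
  shows "mu p m (flip x j) * (if x j then p else 1 - p) = mu p m x * (if x j then 1 - p else p)"
proof -
  let ?F = "\<lambda>y l. if y l then p else 1 - p"
  have "mu p m y = ?F y j * (\<Prod>l\<in>{..<m} - {j}. ?F y l)" for y
    unfolding mu_def using assms by (subst prod.remove[of _ j]) auto
  moreover have "(\<Prod>l\<in>{..<m} - {j}. ?F (flip x j) l) = (\<Prod>l\<in>{..<m} - {j}. ?F x l)"
    by (rule prod.cong) (auto simp: flip_def)
  ultimately show ?thesis by simp
qed

lemma mu_flip_le:
  assumes "j < m" "0 < lam" "lam < p" "p < 1 - lam"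
  shows "lam * mu p m (flip x j) \<le> (1 - lam) * mu p m x"
proof -
  have nonneg: "0 \<le> mu p m y" for y using assms by (intro mu_nonneg) auto
  show ?thesis
  proof (cases "x j")
    case True
    then have "lam * mu p m (flip x j) \<le> p * mu p m (flip x j)"
      using assms nonneg by (intro mult_right_mono) auto
    also have "\<dots> = (1 - p) * mu p m x" using mu_flip[OF assms(1), of p x] True by (simp add: mult.commute)
    also have "\<dots> \<le> (1 - lam) * mu p m x" using assms nonneg by (intro mult_right_mono) auto
    finally show ?thesis .
  next
    case False
    then have "lam * mu p m (flip x j) \<le> (1 - p) * mu p m (flip x j)"
      using assms nonneg by (intro mult_right_mono) auto
    also have "\<dots> = p * mu p m x" using mu_flip[OF assms(1), of p x] False by (simp add: mult.commute)
    also have "\<dots> \<le> (1 - lam) * mu p m x" using assms nonneg by (intro mult_right_mono) auto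
    finally show ?thesis .
  qed
qed

lemma even_weight_flip:
  assumes x: "x \<in> cube m" and i: "i < m"
  shows "even (weight (flip x i)) \<longleftrightarrow> odd (weight x)"
proof (cases "x i")
  case True
  have "{j. flip x i j} = {j. x j} - {i}" using True by (auto simp: flip_def)
  moreover have "weight x \<noteq> 0" using True finite_ones[OF x] by (auto simp: weight_def)
  ultimately show ?thesis using True finite_ones[OF x] by (auto simp: weight_def)
next
  case False
  have "{j. flip x i j} = insert i {j. x j}" using False by (auto simp: flip_def)
  then show ?thesis using False finite_ones[OF x] by (simp add: weight_def)
qed

lemma sum_flip:
  fixes \<phi> :: "(nat \<Rightarrow> bool) \<Rightarrow> real"
  assumes "i < m"
  shows "(\<Sum>x\<in>cube m. \<phi> (flip x i)) = (\<Sum>x\<in>cube m. \<phi> x)"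
  by (rule sum.reindex_bij_witness[where i="\<lambda>x. flip x i" and j="\<lambda>x. flip x i"])
     (auto simp: flip_in_cube assms)

lemma sum_cube_even_flip:
  fixes \<phi> :: "(nat \<Rightarrow> bool) \<Rightarrow> real"
  assumes "i < m"
  shows "(\<Sum>x\<in>cube m. \<phi> x) = (\<Sum>x\<in>{x\<in>cube m. even (weight x)}. \<phi> x + \<phi> (flip x i))"
proof -
  have "(\<Sum>x\<in>cube m. \<phi> x)
      = (\<Sum>x\<in>{x\<in>cube m. even (weight x)}. \<phi> x) + (\<Sum>x\<in>{x\<in>cube m. odd (weight x)}. \<phi> x)"
    by (subst sum.union_disjoint[symmetric]) (auto intro: sum.cong simp: finite_cube)
  also have "(\<Sum>x\<in>{x\<in>cube m. odd (weight x)}. \<phi> x)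
      = (\<Sum>x\<in>{x\<in>cube m. even (weight x)}. \<phi> (flip x i))"
    by (rule sum.reindex_bij_witness[where i="\<lambda>x. flip x i" and j="\<lambda>x. flip x i"])
       (auto simp: flip_in_cube even_weight_flip assms)
  finally show ?thesis by (simp add: sum.distrib)
qed

text \<open>The two points of a flip pair have masses within a factor \<open>(1 - lam) / lam\<close> of each other
  (\<open>mu_flip_le\<close>), so the one of even weight carries at least a \<open>lam\<close>-fraction of the pair.\<close>

lemma sum_even_weight_ge:
  assumes lam: "0 < lam" "lam < p" "p < 1 - lam" and i: "i < m"
    and \<phi>: "\<And>x. 0 \<le> \<phi> x" "\<And>x. \<phi> (flip x i) = \<phi> x"
  shows "lam * (\<Sum>x\<in>cube m. mu p m x * \<phi> x)
    \<le> (\<Sum>x\<in>{x\<in>cube m. even (weight x)}. mu p m x * \<phi> x)"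
proof -
  have "lam * (\<Sum>x\<in>cube m. mu p m x * \<phi> x)
      = (\<Sum>x\<in>{x\<in>cube m. even (weight x)}. lam * (mu p m x + mu p m (flip x i)) * \<phi> x)"
    by (simp add: sum_cube_even_flip[OF i] sum_distrib_left \<phi>(2) algebra_simps)
  also have "\<dots> \<le> (\<Sum>x\<in>{x\<in>cube m. even (weight x)}. mu p m x * \<phi> x)"
    using mu_flip_le[OF i lam] \<phi>(1) by (intro sum_mono mult_right_mono) (auto simp: algebra_simps)
  finally show ?thesis .
qed

definition pivotal :: "((nat \<Rightarrow> bool) \<Rightarrow> bool) \<Rightarrow> (nat \<Rightarrow> bool) \<Rightarrow> nat \<Rightarrow> bool" where
  "pivotal f x j \<longleftrightarrow> f x \<noteq> f (flip x j)"

lemma pivotal_flip [simp]: "pivotal f (flip x j) j = pivotal f x j"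
  by (auto simp: pivotal_def)

lemma influence_bval:
  "influence p m (bval f) j
    = (\<Sum>x\<in>cube m. mu p m x * ((if x j then (1 - p)^2 else p^2) * of_bool (pivotal f x j)))"
  unfolding influence_def
proof (rule sum.cong[OF refl])
  fix x
  have "x(j := x j) = x" "x(j := \<not> x j) = flip x j" by (simp_all add: flip_def)
  then have "(bval f x - (p * bval f (x(j := True)) + (1 - p) * bval f (x(j := False))))^2
      = (if x j then (1 - p)^2 else p^2) * of_bool (pivotal f x j)"
    by (cases "x j") (auto simp: bval_def pivotal_def power2_eq_square algebra_simps)
  then show "mu p m x * (bval f x - (p * bval f (x(j := True)) + (1 - p) * bval f (x(j := False))))^2
      = mu p m x * ((if x j then (1 - p)^2 else p^2) * of_bool (pivotal f x j))"
    by simp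
qed

lemma influence_le_pivotal:
  assumes "0 \<le> p" "p \<le> 1"
  shows "influence p m (bval f) j \<le> (\<Sum>x\<in>cube m. mu p m x * of_bool (pivotal f x j))"
  unfolding influence_bval
  using assms by (intro sum_mono mult_left_mono) (auto simp: mu_nonneg power_le_one)

lemma pivotal_le_influence:
  assumes "0 < lam" "lam < p" "p < 1 - lam"
  shows "lam^2 * (\<Sum>x\<in>cube m. mu p m x * of_bool (pivotal f x j)) \<le> influence p m (bval f) j"
  unfolding influence_bval sum_distrib_left
proof (intro sum_mono)
  fix x
  have "lam^2 \<le> (if x j then (1 - p)^2 else p^2)" using assms by (auto intro!: power_mono)
  moreover have "0 \<le> mu p m x" using assms by (intro mu_nonneg) auto
  ultimately have "mu p m x * lam^2 * of_bool (pivotal f x j)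
      \<le> mu p m x * (if x j then (1 - p)^2 else p^2) * of_bool (pivotal f x j)"
    by (intro mult_left_mono mult_right_mono) simp_all
  then show "lam^2 * (mu p m x * of_bool (pivotal f x j))
      \<le> mu p m x * ((if x j then (1 - p)^2 else p^2) * of_bool (pivotal f x j))"
    by (simp only: ac_simps)
qed

lemma influence_le_1:
  assumes "0 \<le> p" "p \<le> 1"
  shows "influence p m (bval f) j \<le> 1"
proof -
  have "influence p m (bval f) j \<le> (\<Sum>x\<in>cube m. mu p m x * of_bool (pivotal f x j))"
    by (rule influence_le_pivotal[OF assms])
  also have "\<dots> \<le> (\<Sum>x\<in>cube m. mu p m x)"
    using assms by (intro sum_mono) (simp add: mu_nonneg)
  finally show ?thesis by (simp add: sum_mu)
qed

lemma influence_nonneg: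
  assumes "0 \<le> p" "p \<le> 1"
  shows "0 \<le> influence p m (bval f) j"
  unfolding influence_bval using assms by (intro sum_nonneg mult_nonneg_nonneg) (auto simp: mu_nonneg)

lemma total_influence_nonneg:
  assumes "0 \<le> p" "p \<le> 1"
  shows "0 \<le> total_influence p m (bval f)"
  unfolding total_influence_def using assms by (intro sum_nonneg influence_nonneg)

section \<open>Two-to-one maps and lifted points\<close>

definition lift :: "nat \<Rightarrow> (nat \<Rightarrow> nat) \<Rightarrow> (nat \<Rightarrow> bool) \<Rightarrow> nat \<Rightarrow> bool" where
  "lift n \<pi> y = (\<lambda>j. if j < 2*n then y (\<pi> j) else False)"

lemma minor_eq_lift: "minor (2*n) f \<pi> y = f (lift n \<pi> y)"
  by (simp add: minor_def lift_def)

lemma lift_in_cube: "lift n \<pi> y \<in> cube (2*n)"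
  by (auto simp: lift_def cube_def)

lemma two_to_one_maps_lessThan: "\<pi> \<in> two_to_one_maps n \<Longrightarrow> j < 2*n \<Longrightarrow> \<pi> j < n"
  by (auto simp: two_to_one_maps_def PiE_iff)

lemma card_two_to_one_maps_fiber:
  "\<pi> \<in> two_to_one_maps n \<Longrightarrow> k < n \<Longrightarrow> card {j\<in>{0..<2*n}. \<pi> j = k} = 2"
  by (auto simp: two_to_one_maps_def)

lemma two_to_one_maps_surj:
  assumes "\<pi> \<in> two_to_one_maps n" "k < n"
  obtains j where "j < 2*n" "\<pi> j = k"
proof -
  have "{j\<in>{0..<2*n}. \<pi> j = k} \<noteq> {}"
    using card_two_to_one_maps_fiber[OF assms] by (metis card.empty zero_neq_numeral)
  then show ?thesis using that by auto
qed

lemma finite_two_to_one_maps: "finite (two_to_one_maps n)"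
  by (rule finite_subset[of _ "{0..<2*n} \<rightarrow>\<^sub>E {0..<n}"]) (auto simp: two_to_one_maps_def finite_PiE)

lemma card_two_to_one_maps_pos: "0 < card (two_to_one_maps n)"
proof -
  define \<pi> where "\<pi> = (\<lambda>j. if j < 2*n then j div 2 else undefined)"
  have "{j\<in>{0..<2*n}. \<pi> j = k} = {2*k, 2*k+1}" if "k < n" for k
    using that by (auto simp: \<pi>_def)
  then have "\<pi> \<in> two_to_one_maps n"
    by (auto simp: two_to_one_maps_def \<pi>_def PiE_iff extensional_def less_mult_imp_div_less)
  then show ?thesis using finite_two_to_one_maps card_gt_0_iff by blast
qed

lemma inj_on_lift:
  assumes "\<pi> \<in> two_to_one_maps n"
  shows "inj_on (lift n \<pi>) (cube n)"
proof (rule inj_onI)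
  fix y y' assume y: "y \<in> cube n" "y' \<in> cube n" and eq: "lift n \<pi> y = lift n \<pi> y'"
  show "y = y'"
  proof
    fix k show "y k = y' k"
    proof (cases "k < n")
      case True
      then obtain j where "j < 2*n" "\<pi> j = k" using two_to_one_maps_surj[OF assms] by blast
      then show ?thesis using fun_cong[OF eq, of j] by (auto simp: lift_def)
    qed (use y in \<open>auto simp: cube_def not_less\<close>)
  qed
qed

lemma weight_lift:
  assumes "\<pi> \<in> two_to_one_maps n" "y \<in> cube n"
  shows "weight (lift n \<pi> y) = 2 * weight y"
proof -
  have "{j. lift n \<pi> y j} = (\<Union>k\<in>{k. y k}. {j\<in>{0..<2*n}. \<pi> j = k})"
    by (auto simp: lift_def)
  also have "card \<dots> = (\<Sum>k\<in>{k. y k}. card {j\<in>{0..<2*n}. \<pi> j = k})"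
    by (rule card_UN_disjoint) (auto simp: finite_ones[OF assms(2)])
  also have "\<dots> = (\<Sum>k\<in>{k. y k}. 2)"
    using cube_ones_subset[OF assms(2)] card_two_to_one_maps_fiber[OF assms(1)]
    by (intro sum.cong) auto
  finally show ?thesis by (simp add: weight_def)
qed

lemma permutes_lessThan_iff: "\<sigma> permutes {..<m} \<Longrightarrow> \<sigma> j < m \<longleftrightarrow> j < m"
  using permutes_in_image by fastforce

lemma comp_permutes_in_two_to_one_maps:
  assumes \<sigma>: "\<sigma> permutes {..<2*n}" and \<pi>: "\<pi> \<in> two_to_one_maps n"
  shows "\<pi> \<circ> \<sigma> \<in> two_to_one_maps n"
proof -
  have "\<pi> \<circ> \<sigma> \<in> {0..<2*n} \<rightarrow>\<^sub>E {0..<n}"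
    using \<pi> permutes_lessThan_iff[OF \<sigma>] permutes_not_in[OF \<sigma>]
    by (auto simp: two_to_one_maps_def PiE_iff extensional_def)
  moreover have "card {j\<in>{0..<2*n}. (\<pi> \<circ> \<sigma>) j = k} = 2" if "k < n" for k
  proof -
    have "\<sigma> ` {j\<in>{0..<2*n}. (\<pi> \<circ> \<sigma>) j = k} = {l\<in>{0..<2*n}. \<pi> l = k}"
    proof (intro set_eqI iffI)
      fix l assume l: "l \<in> {l\<in>{0..<2*n}. \<pi> l = k}"
      obtain j where "\<sigma> j = l" using permutes_surj[OF \<sigma>] by (metis surjD)
      then show "l \<in> \<sigma> ` {j\<in>{0..<2*n}. (\<pi> \<circ> \<sigma>) j = k}"
        using l permutes_lessThan_iff[OF \<sigma>, of j] by auto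
    qed (use permutes_lessThan_iff[OF \<sigma>] in auto)
    moreover have "inj_on \<sigma> {j\<in>{0..<2*n}. (\<pi> \<circ> \<sigma>) j = k}"
      using permutes_inj[OF \<sigma>] by (auto intro: inj_on_subset)
    ultimately show ?thesis
      using card_two_to_one_maps_fiber[OF \<pi> that] card_image by fastforce
  qed
  ultimately show ?thesis by (auto simp: two_to_one_maps_def)
qed

lemma lift_comp_permutes: "\<sigma> permutes {..<2*n} \<Longrightarrow> lift n (\<pi> \<circ> \<sigma>) y = lift n \<pi> y \<circ> \<sigma>"
  by (auto simp: lift_def permutes_lessThan_iff)

lemma card_le_if_comp_permutes_image:
  assumes "\<sigma> permutes S" "(\<lambda>\<pi>. \<pi> \<circ> \<sigma>) ` A \<subseteq> B" "finite B"
  shows "card A \<le> card B"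
proof (rule card_inj_on_le[OF _ assms(2,3)])
  show "inj_on (\<lambda>\<pi>. \<pi> \<circ> \<sigma>) A"
    using permutes_surj[OF assms(1)] by (auto intro!: inj_onI simp: fun_eq_iff surj_def) metis
qed

lemma exists_permutes_weight:
  assumes x: "x \<in> cube m" and x': "x' \<in> cube m" and w: "weight x = weight x'"
  obtains \<sigma> where "\<sigma> permutes {..<m}" "x' = x \<circ> \<sigma>"
proof -
  define A B A' B' where "A = {j. x j}" and "B = {..<m} - A" and "A' = {j. x' j}" and "B' = {..<m} - A'"
  have sub: "A \<subseteq> {..<m}" "A' \<subseteq> {..<m}"
    using cube_ones_subset[OF x] cube_ones_subset[OF x'] by (auto simp: A_def A'_def)
  have "card A' = card A" "card B' = card B"
    using w sub finite_subset[OF sub(1)] finite_subset[OF sub(2)]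
    by (simp_all add: A_def A'_def B_def B'_def weight_def card_Diff_subset)
  then obtain h1 h2 where h1: "bij_betw h1 A' A" and h2: "bij_betw h2 B' B"
    using finite_same_card_bij finite_subset[OF sub(1)] finite_subset[OF sub(2)]
    by (metis B_def B'_def finite_Diff finite_lessThan)
  define \<sigma> where "\<sigma> l = (if l \<in> A' then h1 l else if l \<in> B' then h2 l else l)" for l
  have bA: "bij_betw \<sigma> A' A"
    using h1 by (rule bij_betw_cong[THEN iffD1, rotated]) (simp add: \<sigma>_def)
  have bB: "bij_betw \<sigma> B' B"
    using h2 by (rule bij_betw_cong[THEN iffD1, rotated]) (simp add: \<sigma>_def B'_def)
  have "bij_betw \<sigma> (A' \<union> B') (A \<union> B)"
    using bA bB by (rule bij_betw_combine) (auto simp: B_def)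
  moreover have "A' \<union> B' = {..<m}" "A \<union> B = {..<m}" using sub by (auto simp: B_def B'_def)
  ultimately have perm: "\<sigma> permutes {..<m}"
    by (intro bij_imp_permutes) (auto simp: \<sigma>_def B'_def)
  have "x' l = x (\<sigma> l)" for l
  proof (cases "l \<in> A' \<union> B'")
    case True
    then show ?thesis using bij_betwE[OF bA] bij_betwE[OF bB]
      by (auto simp: A_def A'_def B_def B'_def)
  next
    case False
    then show ?thesis using x x' sub by (auto simp: \<sigma>_def B'_def cube_def)
  qed
  then show ?thesis using that perm by (auto simp: fun_eq_iff)
qed

definition compatible_maps :: "nat \<Rightarrow> (nat \<Rightarrow> bool) \<Rightarrow> (nat \<Rightarrow> nat) set" where
  "compatible_maps n x = {\<pi> \<in> two_to_one_maps n. x \<in> lift n \<pi> ` cube n}"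

lemma finite_compatible_maps: "finite (compatible_maps n x)"
  unfolding compatible_maps_def using finite_two_to_one_maps by simp

lemma compatible_maps_odd_weight: "odd (weight x) \<Longrightarrow> compatible_maps n x = {}"
  by (auto simp: compatible_maps_def weight_lift)

lemma sum_two_to_one_maps_lift:
  fixes \<Phi> :: "(nat \<Rightarrow> bool) \<Rightarrow> (nat \<Rightarrow> nat) \<Rightarrow> real"
  shows "(\<Sum>\<pi>\<in>two_to_one_maps n. \<Sum>y\<in>cube n. mu p n y * \<Phi> (lift n \<pi> y) \<pi>)
    = (\<Sum>x\<in>cube (2*n). p ^ (weight x div 2) * (1 - p) ^ (n - weight x div 2)
         * (\<Sum>\<pi>\<in>compatible_maps n x. \<Phi> x \<pi>))"
proof -
  let ?w = "\<lambda>x. p ^ (weight x div 2) * (1 - p) ^ (n - weight x div 2)"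
  have "(\<Sum>y\<in>cube n. mu p n y * \<Phi> (lift n \<pi> y) \<pi>)
      = (\<Sum>x\<in>cube (2*n). if x \<in> lift n \<pi> ` cube n then ?w x * \<Phi> x \<pi> else 0)"
    if \<pi>: "\<pi> \<in> two_to_one_maps n" for \<pi>
  proof -
    have "(\<Sum>y\<in>cube n. mu p n y * \<Phi> (lift n \<pi> y) \<pi>) = (\<Sum>y\<in>cube n. ?w (lift n \<pi> y) * \<Phi> (lift n \<pi> y) \<pi>)"
      by (intro sum.cong) (simp_all add: mu_weight weight_lift[OF \<pi>])
    also have "\<dots> = (\<Sum>x\<in>lift n \<pi> ` cube n. ?w x * \<Phi> x \<pi>)"
      by (rule sum.reindex[OF inj_on_lift[OF \<pi>], symmetric, unfolded comp_def])
    also have "\<dots> = (\<Sum>x\<in>cube (2*n). if x \<in> lift n \<pi> ` cube n then ?w x * \<Phi> x \<pi> else 0)"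
      using lift_in_cube by (intro sum.mono_neutral_cong_left) (auto simp: finite_cube)
    finally show ?thesis .
  qed
  then have "(\<Sum>\<pi>\<in>two_to_one_maps n. \<Sum>y\<in>cube n. mu p n y * \<Phi> (lift n \<pi> y) \<pi>)
      = (\<Sum>x\<in>cube (2*n). \<Sum>\<pi>\<in>two_to_one_maps n. if x \<in> lift n \<pi> ` cube n then ?w x * \<Phi> x \<pi> else 0)"
    by (simp add: sum.swap[of _ "two_to_one_maps n"])
  also have "\<dots> = (\<Sum>x\<in>cube (2*n). ?w x * (\<Sum>\<pi>\<in>compatible_maps n x. \<Phi> x \<pi>))"
    unfolding compatible_maps_def sum_distrib_left
    by (rule sum.cong[OF refl], rule sum.inter_filter[symmetric, OF finite_two_to_one_maps])
  finally show ?thesis .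
qed

lemma card_weight_slice: "card {x\<in>cube m. weight x = w} = m choose w"
proof -
  have "{x\<in>cube m. weight x = w} = (\<lambda>S j. j \<in> S) ` {S. S \<subseteq> {..<m} \<and> card S = w}"
  proof (intro set_eqI iffI)
    fix x assume "x \<in> {x\<in>cube m. weight x = w}"
    then have "x = (\<lambda>j. j \<in> {j. x j})" "{j. x j} \<subseteq> {..<m}" "card {j. x j} = w"
      using cube_ones_subset[of x m] by (auto simp: weight_def)
    then show "x \<in> (\<lambda>S j. j \<in> S) ` {S. S \<subseteq> {..<m} \<and> card S = w}" by blast
  qed (auto simp: cube_def weight_def)
  moreover have "inj_on (\<lambda>S j. j \<in> S) {S. S \<subseteq> {..<m} \<and> card S = w}"
    by (rule inj_onI) (simp add: fun_eq_iff set_eq_iff)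
  ultimately show ?thesis by (simp add: card_image n_subsets)
qed

lemma sum_card_compatible_maps_slice:
  "(\<Sum>x\<in>{x\<in>cube (2*n). weight x = 2*k}. card (compatible_maps n x))
    = card (two_to_one_maps n) * (n choose k)"
proof -
  let ?S = "{x\<in>cube (2*n). weight x = 2*k}"
  have "card (compatible_maps n x) = (\<Sum>\<pi>\<in>two_to_one_maps n. of_bool (x \<in> lift n \<pi> ` cube n))"
    for x by (simp add: finite_two_to_one_maps compatible_maps_def Int_def)
  then have "(\<Sum>x\<in>?S. card (compatible_maps n x))
      = (\<Sum>\<pi>\<in>two_to_one_maps n. \<Sum>x\<in>?S. of_bool (x \<in> lift n \<pi> ` cube n))"
    by (simp add: sum.swap[of _ ?S])
  also have "\<dots> = (\<Sum>\<pi>\<in>two_to_one_maps n. n choose k)"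
  proof (intro sum.cong refl)
    fix \<pi> assume \<pi>: "\<pi> \<in> two_to_one_maps n"
    have "?S \<inter> {x. x \<in> lift n \<pi> ` cube n} = lift n \<pi> ` {y\<in>cube n. weight y = k}"
      using weight_lift[OF \<pi>] lift_in_cube by auto
    moreover have "inj_on (lift n \<pi>) {y\<in>cube n. weight y = k}"
      using inj_on_lift[OF \<pi>] by (rule inj_on_subset) auto
    ultimately show "(\<Sum>x\<in>?S. of_bool (x \<in> lift n \<pi> ` cube n)) = n choose k"
      by (simp add: finite_cube card_image card_weight_slice)
  qed
  finally show ?thesis by simp
qed

text \<open>A map \<open>\<pi>\<close> is compatible with \<open>x\<close> iff \<open>x \<circ> \<sigma>\<close> is compatible with \<open>\<pi> \<circ> \<sigma>\<close>;
  since permutations act transitively on each weight slice, the number of compatible maps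
  depends only on the weight, and double counting over the slice gives its value.\<close>

lemma card_compatible_maps_mono:
  assumes x: "x \<in> cube (2*n)" and x': "x' \<in> cube (2*n)" and w: "weight x = weight x'"
  shows "card (compatible_maps n x) \<le> card (compatible_maps n x')"
proof -
  obtain \<sigma> where \<sigma>: "\<sigma> permutes {..<2*n}" and x': "x' = x \<circ> \<sigma>"
    using exists_permutes_weight[OF x x' w] by blast
  have "(\<lambda>\<pi>. \<pi> \<circ> \<sigma>) ` compatible_maps n x \<subseteq> compatible_maps n x'"
    using comp_permutes_in_two_to_one_maps[OF \<sigma>] lift_comp_permutes[OF \<sigma>]
    by (auto simp: compatible_maps_def x')
  then show ?thesis by (rule card_le_if_comp_permutes_image[OF \<sigma> _ finite_compatible_maps])
qed

lemma card_compatible_maps: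
  assumes x: "x \<in> cube (2*n)" and w: "weight x = 2*k"
  shows "card (compatible_maps n x) * ((2*n) choose (2*k)) = card (two_to_one_maps n) * (n choose k)"
proof -
  let ?S = "{x\<in>cube (2*n). weight x = 2*k}"
  have "card (compatible_maps n x') = card (compatible_maps n x)" if "x' \<in> ?S" for x'
    using that x w card_compatible_maps_mono[of x' n x] card_compatible_maps_mono[of x n x']
    by simp
  then have "card ?S * card (compatible_maps n x) = card (two_to_one_maps n) * (n choose k)"
    using sum_card_compatible_maps_slice[of n k] by simp
  then show ?thesis by (simp add: card_weight_slice mult.commute)
qed

definition mates :: "nat \<Rightarrow> nat \<Rightarrow> (nat \<Rightarrow> bool) \<Rightarrow> nat set" where
  "mates n i x = {j\<in>{..<2*n}. j \<noteq> i \<and> x j = x i}"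

lemma finite_mates: "finite (mates n i x)"
  by (simp add: mates_def)

lemma partner_in_mates:
  assumes \<pi>: "\<pi> \<in> two_to_one_maps n" and i: "i < 2*n" and x: "x \<in> lift n \<pi> ` cube n"
  obtains j where "j \<in> mates n i x" "\<And>l. l < 2*n \<Longrightarrow> \<pi> l = \<pi> i \<longleftrightarrow> l = i \<or> l = j"
proof -
  have "card {l\<in>{0..<2*n}. \<pi> l = \<pi> i} = 2"
    by (rule card_two_to_one_maps_fiber[OF \<pi> two_to_one_maps_lessThan[OF \<pi> i]])
  then obtain a b where ab: "{l\<in>{0..<2*n}. \<pi> l = \<pi> i} = {a, b}" "a \<noteq> b"
    unfolding card_2_iff by blast
  moreover have "i \<in> {l\<in>{0..<2*n}. \<pi> l = \<pi> i}" using i by simp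
  ultimately have "i = a \<or> i = b" by simp
  define j where "j = (if i = a then b else a)"
  have fiber: "{l\<in>{0..<2*n}. \<pi> l = \<pi> i} = {i, j}" "j \<noteq> i"
    using ab \<open>i = a \<or> i = b\<close> by (auto simp: j_def)
  then have "j < 2*n" "\<pi> j = \<pi> i" by (auto simp: set_eq_iff)
  moreover obtain y where "x = lift n \<pi> y" using x by blast
  ultimately have "j \<in> mates n i x" using i fiber(2) by (simp add: mates_def lift_def)
  moreover have "\<pi> l = \<pi> i \<longleftrightarrow> l = i \<or> l = j" if "l < 2*n" for l
    using fiber(1) that by (auto simp: set_eq_iff)
  ultimately show ?thesis using that by blast
qed

definition paired_maps :: "nat \<Rightarrow> nat \<Rightarrow> (nat \<Rightarrow> bool) \<Rightarrow> nat \<Rightarrow> (nat \<Rightarrow> nat) set" where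
  "paired_maps n i x j = {\<pi> \<in> compatible_maps n x. \<pi> j = \<pi> i}"

lemma card_paired_maps_mono:
  assumes i: "i < 2*n" and j: "j \<in> mates n i x" and j': "j' \<in> mates n i x"
  shows "card (paired_maps n i x j) \<le> card (paired_maps n i x j')"
proof -
  define \<sigma> where "\<sigma> = Transposition.transpose j j'"
  have \<sigma>: "\<sigma> permutes {..<2*n}"
    using j j' unfolding \<sigma>_def by (intro permutes_swap_id) (auto simp: mates_def)
  have "x \<circ> \<sigma> = x" "\<sigma> i = i" "\<sigma> j' = j"
    using j j' by (auto simp: \<sigma>_def mates_def fun_eq_iff Transposition.transpose_def)
  have "\<pi> \<circ> \<sigma> \<in> paired_maps n i x j'" if "\<pi> \<in> paired_maps n i x j" for \<pi>
  proof -
    have "\<pi> \<in> two_to_one_maps n" "x \<in> lift n \<pi> ` cube n" "\<pi> j = \<pi> i"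
      using that by (auto simp: paired_maps_def compatible_maps_def)
    moreover obtain y where "y \<in> cube n" "x = lift n \<pi> y" using calculation(2) by blast
    then have "x \<in> lift n (\<pi> \<circ> \<sigma>) ` cube n"
      using lift_comp_permutes[OF \<sigma>, of \<pi> y] \<open>x \<circ> \<sigma> = x\<close> by (metis image_eqI)
    ultimately show ?thesis
      using comp_permutes_in_two_to_one_maps[OF \<sigma>] \<open>\<sigma> i = i\<close> \<open>\<sigma> j' = j\<close>
      by (auto simp: paired_maps_def compatible_maps_def)
  qed
  then show ?thesis
    by (intro card_le_if_comp_permutes_image[OF \<sigma>]) (auto simp: paired_maps_def finite_compatible_maps)
qed

lemma sum_card_paired_maps:
  assumes i: "i < 2*n"
  shows "(\<Sum>j\<in>mates n i x. card (paired_maps n i x j)) = card (compatible_maps n x)"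
proof -
  have "card (paired_maps n i x j) = (\<Sum>\<pi>\<in>compatible_maps n x. of_bool (\<pi> j = \<pi> i))" for j
    by (simp add: finite_compatible_maps paired_maps_def Int_def)
  then have "(\<Sum>j\<in>mates n i x. card (paired_maps n i x j))
      = (\<Sum>\<pi>\<in>compatible_maps n x. \<Sum>j\<in>mates n i x. of_bool (\<pi> j = \<pi> i))"
    by (simp add: sum.swap[of _ "mates n i x"])
  also have "\<dots> = (\<Sum>\<pi>\<in>compatible_maps n x. 1)"
  proof (intro sum.cong refl)
    fix \<pi> assume "\<pi> \<in> compatible_maps n x"
    then have "\<pi> \<in> two_to_one_maps n" "x \<in> lift n \<pi> ` cube n"
      by (auto simp: compatible_maps_def)
    then obtain j where "j \<in> mates n i x" "\<And>l. l < 2*n \<Longrightarrow> \<pi> l = \<pi> i \<longleftrightarrow> l = i \<or> l = j"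
      using partner_in_mates i by metis
    then have "mates n i x \<inter> {l. \<pi> l = \<pi> i} = {j}" by (auto simp: mates_def)
    then show "(\<Sum>j\<in>mates n i x. of_bool (\<pi> j = \<pi> i)) = (1::nat)"
      by (simp add: finite_mates)
  qed
  finally show ?thesis by simp
qed

section \<open>The law of a lifted point\<close>

definition lift_ratio :: "real \<Rightarrow> nat \<Rightarrow> nat \<Rightarrow> real" where
  "lift_ratio p n k = real (n choose k) / (real ((2*n) choose (2*k)) * p^k * (1 - p)^(n - k))"

text \<open>The law of \<open>lift n \<pi> y\<close> for a uniformly random \<open>\<pi> \<in> two_to_one_maps n\<close> and
  \<open>y\<close> drawn from \<open>mu p n\<close> (see \<open>sum_two_to_one_maps_lift_density\<close>).\<close>

definition lift_density :: "real \<Rightarrow> nat \<Rightarrow> (nat \<Rightarrow> bool) \<Rightarrow> real" where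
  "lift_density p n x =
     (if even (weight x) then lift_ratio p n (weight x div 2) * mu p (2*n) x else 0)"

lemma lift_ratio_pos: "0 < p \<Longrightarrow> p < 1 \<Longrightarrow> k \<le> n \<Longrightarrow> 0 < lift_ratio p n k"
  unfolding lift_ratio_def by (intro divide_pos_pos mult_pos_pos) auto

lemma lift_density_nonneg:
  "0 < p \<Longrightarrow> p < 1 \<Longrightarrow> x \<in> cube (2*n) \<Longrightarrow> 0 \<le> lift_density p n x"
  unfolding lift_density_def
  using lift_ratio_pos[of p "weight x div 2" n] weight_le[of x "2*n"] mu_nonneg[of p "2*n" x]
  by auto

lemma card_compatible_maps_density:
  assumes p: "0 < p" "p < 1" and x: "x \<in> cube (2*n)"
  shows "real (card (compatible_maps n x)) * (p ^ (weight x div 2) * (1 - p) ^ (n - weight x div 2))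
    = real (card (two_to_one_maps n)) * lift_density p n x"
proof (cases "even (weight x)")
  case True
  then obtain k where w: "weight x = 2*k" by blast
  have kn: "k \<le> n" using weight_le[OF x] w by simp
  let ?w = "p^k * (1 - p)^(n - k)"
  let ?N = "real (card (two_to_one_maps n))"
  have pos: "0 < real ((2*n) choose (2*k))" "0 < ?w" using kn p by auto
  have "mu p (2*n) x = p^(2*k) * (1 - p)^(2*n - 2*k)" using mu_weight[OF x] w by simp
  moreover have "2*n - 2*k = (n - k) + (n - k)" using kn by simp
  ultimately have "mu p (2*n) x = p^k * p^k * ((1 - p)^(n - k) * (1 - p)^(n - k))"
    by (simp add: power_add mult_2)
  then have "mu p (2*n) x = ?w * ?w" by (simp add: mult_ac)
  then have "?N * lift_density p n x = ?N * real (n choose k) / real ((2*n) choose (2*k)) * ?w"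
    using pos by (simp add: lift_density_def lift_ratio_def w field_simps)
  also have "?N * real (n choose k) = real (card (compatible_maps n x)) * real ((2*n) choose (2*k))"
    using card_compatible_maps[OF x w] by (metis of_nat_mult)
  finally show ?thesis using pos by (simp add: w)
qed (simp add: lift_density_def compatible_maps_odd_weight)

lemma sum_two_to_one_maps_lift_density:
  fixes \<Phi> :: "(nat \<Rightarrow> bool) \<Rightarrow> (nat \<Rightarrow> nat) \<Rightarrow> real" and \<psi> :: "(nat \<Rightarrow> bool) \<Rightarrow> real"
  assumes p: "0 < p" "p < 1"
    and avg: "\<And>x. x \<in> cube (2*n) \<Longrightarrow>
      (\<Sum>\<pi>\<in>compatible_maps n x. \<Phi> x \<pi>) = real (card (compatible_maps n x)) * \<psi> x"
  shows "(\<Sum>\<pi>\<in>two_to_one_maps n. \<Sum>y\<in>cube n. mu p n y * \<Phi> (lift n \<pi> y) \<pi>)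
    = real (card (two_to_one_maps n)) * (\<Sum>x\<in>cube (2*n). lift_density p n x * \<psi> x)"
proof -
  have "(\<Sum>\<pi>\<in>two_to_one_maps n. \<Sum>y\<in>cube n. mu p n y * \<Phi> (lift n \<pi> y) \<pi>)
      = (\<Sum>x\<in>cube (2*n). real (card (two_to_one_maps n)) * (lift_density p n x * \<psi> x))"
    unfolding sum_two_to_one_maps_lift
  proof (rule sum.cong[OF refl])
    fix x assume x: "x \<in> cube (2*n)"
    show "p ^ (weight x div 2) * (1 - p) ^ (n - weight x div 2) * (\<Sum>\<pi>\<in>compatible_maps n x. \<Phi> x \<pi>)
        = real (card (two_to_one_maps n)) * (lift_density p n x * \<psi> x)"
      using card_compatible_maps_density[OF p x] by (simp add: avg[OF x] algebra_simps)
  qed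
  then show ?thesis by (simp add: sum_distrib_left)
qed

lemma sum_lift_density_weight:
  fixes \<phi> :: "nat \<Rightarrow> real"
  assumes p: "0 < p" "p < 1"
  shows "(\<Sum>x\<in>cube (2*n). lift_density p n x * \<phi> (weight x div 2)) = (\<Sum>y\<in>cube n. mu p n y * \<phi> (weight y))"
proof -
  let ?N = "real (card (two_to_one_maps n))"
  have "?N * (\<Sum>x\<in>cube (2*n). lift_density p n x * \<phi> (weight x div 2))
      = (\<Sum>\<pi>\<in>two_to_one_maps n. \<Sum>y\<in>cube n. mu p n y * \<phi> (weight (lift n \<pi> y) div 2))"
    by (rule sum_two_to_one_maps_lift_density[OF p, symmetric]) simp
  also have "\<dots> = ?N * (\<Sum>y\<in>cube n. mu p n y * \<phi> (weight y))"
    by (simp add: weight_lift cong: sum.cong)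
  finally show ?thesis using card_two_to_one_maps_pos[of n] by simp
qed

lemma sum_lift_density: "0 < p \<Longrightarrow> p < 1 \<Longrightarrow> (\<Sum>x\<in>cube (2*n). lift_density p n x) = 1"
  using sum_lift_density_weight[of p n "\<lambda>_. 1"] by (simp add: sum_mu)

section \<open>The density ratio\<close>

definition lift_ratio_step :: "real \<Rightarrow> nat \<Rightarrow> nat \<Rightarrow> real" where
  "lift_ratio_step p n k = (2 * real k + 1) * (1 - p) / ((2 * real n - 2 * real k - 1) * p)"

lemma binomial_Suc_mult: "(n choose Suc k) * Suc k = (n choose k) * (n - k)"
  using binomial_absorption[of k n] binomial_absorb_comp[of n k] by (simp add: mult.commute)

lemma lift_ratio_Suc:
  assumes p: "0 < p" "p < 1" and k: "k < n"
  shows "lift_ratio p n (Suc k) = lift_ratio p n k * lift_ratio_step p n k"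
proof -
  obtain m where m: "n - k = Suc m" using k by (metis Suc_diff_Suc)
  then have nk: "n - Suc k = m" "2*n - 2*k = Suc (Suc (2*m))" "2*n - Suc (2*k) = Suc (2*m)"
    "real n = real k + real m + 1" "2 * Suc k = Suc (Suc (2*k))"
    using k by simp_all
  define a a' b b' b'' where "a = real (n choose k)" and "a' = real (n choose Suc k)"
    and "b = real ((2*n) choose (2*k))" and "b' = real ((2*n) choose Suc (2*k))"
    and "b'' = real ((2*n) choose Suc (Suc (2*k)))"
  have a': "a' = a * (real m + 1) / (real k + 1)"
    using arg_cong[OF binomial_Suc_mult[of n k], of real] unfolding m
    by (simp add: a_def a'_def field_simps)
  have b': "b' = b * (2 * real m + 2) / (2 * real k + 1)"
    using arg_cong[OF binomial_Suc_mult[of "2*n" "2*k"], of real] unfolding nk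
    by (simp add: b_def b'_def field_simps)
  have b'': "b'' = b' * (2 * real m + 1) / (2 * real k + 2)"
    using arg_cong[OF binomial_Suc_mult[of "2*n" "Suc (2*k)"], of real] unfolding nk
    by (simp add: b'_def b''_def field_simps)
  define P Q where "P = p^k" and "Q = (1 - p)^m"
  have pos: "0 < a" "0 < b" "0 < P" "0 < Q" using k p by (simp_all add: a_def b_def P_def Q_def)
  have "lift_ratio p n (Suc k) = a * (2 * real k + 1) / (b * (2 * real m + 1) * p * P * Q)"
    unfolding lift_ratio_def nk a'_def[symmetric] b''_def[symmetric] a' b'' b' P_def[symmetric]
      Q_def[symmetric] power_Suc
    using pos p by (simp add: divide_simps) (simp add: algebra_simps)
  moreover have "lift_ratio p n k * lift_ratio_step p n k
      = a * (2 * real k + 1) / (b * (2 * real m + 1) * p * P * Q)"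
    unfolding lift_ratio_def lift_ratio_step_def m power_Suc a_def[symmetric] b_def[symmetric]
      P_def[symmetric] Q_def[symmetric] nk
    using pos p by (simp add: divide_simps)
  ultimately show ?thesis by simp
qed

definition central_weight :: "real \<Rightarrow> nat \<Rightarrow> nat" where
  "central_weight p n = nat \<lfloor>real n * p + 1/2\<rfloor>"

lemma central_weight_bounds:
  assumes "0 < p" "p < 1"
  shows "central_weight p n \<le> n" "real (central_weight p n) \<le> real n * p + 1/2"
    "real n * p - 1/2 < real (central_weight p n)"
proof -
  have np: "0 \<le> real n * p" "real n * p \<le> real n" using assms by (auto simp: mult_left_le)
  then have r: "real (central_weight p n) = of_int \<lfloor>real n * p + 1/2\<rfloor>"
    by (simp add: central_weight_def)
  show "real (central_weight p n) \<le> real n * p + 1/2" "real n * p - 1/2 < real (central_weight p n)"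
    unfolding r by linarith+
  then show "central_weight p n \<le> n" using np by linarith
qed

lemma lift_ratio_step_ge_1:
  assumes "0 < p" "p < 1" "central_weight p n \<le> k" "k < n"
  shows "1 \<le> lift_ratio_step p n k"
proof -
  have "(2 * real n - 2 * real k - 1) * p \<le> (2 * real k + 1) * (1 - p)"
    using central_weight_bounds(3)[of p n] assms by (simp add: algebra_simps)
  then show ?thesis
    using assms unfolding lift_ratio_step_def by (simp add: divide_simps)
qed

lemma lift_ratio_step_le_1:
  assumes "0 < p" "p < 1" "k < central_weight p n"
  shows "lift_ratio_step p n k \<le> 1"
proof -
  have "real k + 1 \<le> real n * p + 1/2"
    using central_weight_bounds(2)[of p n] assms by linarith
  then have "(2 * real k + 1) * (1 - p) \<le> (2 * real n - 2 * real k - 1) * p"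
    by (simp add: algebra_simps)
  moreover have "0 < 2 * real n - 2 * real k - 1"
    using central_weight_bounds(1)[of p n] assms by linarith
  ultimately show ?thesis
    using assms unfolding lift_ratio_step_def by (simp add: divide_simps)
qed

lemma lift_ratio_step_denominator_ge:
  assumes lam: "0 < lam" "lam < p" "p < 1 - lam" and L: "0 \<le> L" "L \<le> real n * lam / 4"
    and K: "2 * K + 1 \<le> 2 * real n * p + 2 * L"
  shows "real n * lam / 2 \<le> (2 * real n - 2 * K - 1) * p"
proof -
  have "0 \<le> (p - lam) * (1 - lam - p)" using lam by simp
  moreover have "lam * lam \<le> lam * (1/2)" using lam by (intro mult_left_mono) auto
  ultimately have "lam / 2 \<le> p * (1 - p)" by (simp add: algebra_simps)
  then have "real n * lam / 2 \<le> real n * (p * (1 - p))"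
    by (metis mult_left_mono of_nat_0_le_iff times_divide_eq_right)
  moreover have "(2 * K + 1) * p \<le> (2 * real n * p + 2 * L) * p"
    using K lam by (intro mult_right_mono) auto
  moreover have "L * p \<le> L" using L lam by (intro mult_left_le) auto
  ultimately show ?thesis using L by (simp add: algebra_simps)
qed

lemma lift_ratio_step_le_window:
  assumes lam: "0 < lam" "lam < p" "p < 1 - lam" and L: "0 < L" "L \<le> real n * lam / 4"
    and k: "k < n" "real k + 1 \<le> real n * p + L"
  shows "lift_ratio_step p n k \<le> 1 + 4 * L / (real n * lam)"
proof -
  define D where "D = (2 * real n - 2 * real k - 1) * p"
  have D: "real n * lam / 2 \<le> D"
    unfolding D_def using k by (intro lift_ratio_step_denominator_ge[OF lam]) (use L in auto)
  have n: "0 < real n * lam" using L by linarith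
  have "(2 * real k + 1) * (1 - p) \<le> D + 2 * L"
    using k by (simp add: D_def algebra_simps)
  also have "2 * L = 4 * L / (real n * lam) * (real n * lam / 2)"
    using n lam(1) by (cases "n = 0") (simp_all add: field_simps)
  also have "\<dots> \<le> 4 * L / (real n * lam) * D" using D L n by (intro mult_left_mono) auto
  finally have "(2 * real k + 1) * (1 - p) \<le> (1 + 4 * L / (real n * lam)) * D"
    by (simp add: algebra_simps)
  moreover have "0 < D" using D n by linarith
  ultimately show ?thesis
    unfolding lift_ratio_step_def D_def[symmetric] by (simp add: pos_divide_le_eq mult.commute)
qed

lemma lift_ratio_step_ge_window:
  assumes lam: "0 < lam" "lam < p" "p < 1 - lam" and L: "0 < L" "L \<le> real n * lam / 4"
    and k: "k < n" "real n * p - L \<le> real k"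
  shows "1 \<le> (1 + 4 * L / (real n * lam)) * lift_ratio_step p n k"
proof -
  define E where "E = (2 * real k + 1) * (1 - p)"
  have "real n * lam / 2 \<le> (2 * real n - 2 * (real n - real k - 1) - 1) * (1 - p)"
    using lam L k by (intro lift_ratio_step_denominator_ge) (auto simp: algebra_simps)
  then have E: "real n * lam / 2 \<le> E" by (simp add: E_def algebra_simps)
  have n: "0 < real n * lam" using L by linarith
  have "(2 * real n - 2 * real k - 1) * p \<le> E + 2 * L"
    using k by (simp add: E_def algebra_simps)
  also have "2 * L = 4 * L / (real n * lam) * (real n * lam / 2)"
    using n lam(1) by (cases "n = 0") (simp_all add: field_simps)
  also have "\<dots> \<le> 4 * L / (real n * lam) * E" using E L n by (intro mult_left_mono) auto
  finally have "(2 * real n - 2 * real k - 1) * p \<le> (1 + 4 * L / (real n * lam)) * E"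
    by (simp add: algebra_simps)
  moreover have "0 < (2 * real n - 2 * real k - 1) * p" using k lam by simp
  ultimately show ?thesis
    unfolding lift_ratio_step_def E_def[symmetric] by (simp add: divide_simps)
qed

lemma ratio_chain_le_power:
  fixes g :: "nat \<Rightarrow> real"
  assumes "a \<le> b" "0 \<le> c" "\<And>k. a \<le> k \<Longrightarrow> k < b \<Longrightarrow> g (Suc k) \<le> c * g k"
  shows "g b \<le> c ^ (b - a) * g a"
  using assms(1)
proof (induction rule: dec_induct)
  case (step k)
  have "g (Suc k) \<le> c * g k" using step assms(3) by simp
  also have "\<dots> \<le> c * (c ^ (k - a) * g a)" using step.IH assms(2) by (rule mult_left_mono)
  finally show ?case using step by (simp add: Suc_diff_le mult.assoc)
qed simp

lemma ratio_chain_le_power_rev: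
  fixes g :: "nat \<Rightarrow> real"
  assumes "a \<le> b" "0 \<le> c" "\<And>k. a \<le> k \<Longrightarrow> k < b \<Longrightarrow> g k \<le> c * g (Suc k)"
  shows "g a \<le> c ^ (b - a) * g b"
  using assms(1)
proof (induction rule: dec_induct)
  case (step k)
  have "g a \<le> c ^ (k - a) * g k" by (rule step.IH)
  also have "\<dots> \<le> c ^ (k - a) * (c * g (Suc k))"
    using step assms(2,3) by (intro mult_left_mono) auto
  finally show ?case using step by (simp add: Suc_diff_le ac_simps)
qed simp

lemma lift_ratio_central_le:
  assumes p: "0 < p" "p < 1" and k: "k \<le> n"
  shows "lift_ratio p n (central_weight p n) \<le> lift_ratio p n k"
proof (cases "central_weight p n \<le> k")
  case True
  have "lift_ratio p n (central_weight p n) \<le> 1 ^ (k - central_weight p n) * lift_ratio p n k"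
  proof (rule ratio_chain_le_power_rev[OF True])
    fix j assume "central_weight p n \<le> j" "j < k"
    then show "lift_ratio p n j \<le> 1 * lift_ratio p n (Suc j)"
      using lift_ratio_Suc[OF p] lift_ratio_step_ge_1[OF p] lift_ratio_pos[OF p, of j n] k
      by (simp add: mult_le_cancel_left1)
  qed simp
  then show ?thesis by simp
next
  case False
  have "lift_ratio p n (central_weight p n) \<le> 1 ^ (central_weight p n - k) * lift_ratio p n k"
  proof (rule ratio_chain_le_power)
    fix j assume "k \<le> j" "j < central_weight p n"
    moreover have "central_weight p n \<le> n" using central_weight_bounds(1)[OF p] .
    ultimately show "lift_ratio p n (Suc j) \<le> 1 * lift_ratio p n j"
      using lift_ratio_Suc[OF p] lift_ratio_step_le_1[OF p] lift_ratio_pos[OF p, of j n]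
      by (simp add: mult_le_cancel_left1)
  qed (use False in auto)
  then show ?thesis by simp
qed

lemma one_plus_power_le_exp:
  fixes e B :: real
  assumes "0 \<le> e" "real d \<le> B"
  shows "(1 + e) ^ d \<le> exp (e * B)"
proof -
  have "(1 + e) ^ d \<le> exp e ^ d" using assms(1) by (intro power_mono) (auto simp: add.commute)
  also have "\<dots> = exp (real d * e)" by (simp add: exp_of_nat_mult)
  also have "\<dots> \<le> exp (e * B)" using mult_left_mono[OF assms(2,1)] by (simp add: mult.commute)
  finally show ?thesis .
qed

lemma lift_ratio_window_le:
  assumes lam: "0 < lam" "lam < p" "p < 1 - lam" and L: "1 \<le> L" "L \<le> real n * lam / 4"
    and k: "k \<le> n" "\<bar>real k - real n * p\<bar> \<le> L"
  shows "lift_ratio p n k \<le> exp (8 * L^2 / (real n * lam)) * lift_ratio p n (central_weight p n)"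
proof -
  have p: "0 < p" "p < 1" using lam by auto
  define e where "e = 4 * L / (real n * lam)"
  define c where "c = central_weight p n"
  have e: "0 \<le> e" using L lam by (simp add: e_def)
  have c: "c \<le> n" "real c \<le> real n * p + 1/2" "real n * p - 1/2 < real c"
    using central_weight_bounds[OF p] by (simp_all add: c_def)
  obtain d where d: "lift_ratio p n k \<le> (1 + e) ^ d * lift_ratio p n c" "real d \<le> 2 * L"
  proof (cases "c \<le> k")
    case True
    have "lift_ratio p n k \<le> (1 + e) ^ (k - c) * lift_ratio p n c"
    proof (rule ratio_chain_le_power[OF True])
      fix j assume "c \<le> j" "j < k"
      then show "lift_ratio p n (Suc j) \<le> (1 + e) * lift_ratio p n j"
        using lift_ratio_Suc[OF p] lift_ratio_step_le_window[OF lam _ L(2), of j]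
          lift_ratio_pos[OF p, of j n] k L
        by (simp add: e_def mult.commute mult_left_mono)
    qed (use e in simp)
    moreover have "real (k - c) \<le> 2 * L" using True k c L by (simp add: of_nat_diff)
    ultimately show ?thesis using that by blast
  next
    case False
    have "lift_ratio p n k \<le> (1 + e) ^ (c - k) * lift_ratio p n c"
    proof (rule ratio_chain_le_power_rev)
      fix j assume j: "k \<le> j" "j < c"
      then have "1 \<le> (1 + e) * lift_ratio_step p n j"
        using lift_ratio_step_ge_window[OF lam _ L(2), of j] k c L by (simp add: e_def)
      then show "lift_ratio p n j \<le> (1 + e) * lift_ratio p n (Suc j)"
        using lift_ratio_Suc[OF p, of j n] lift_ratio_pos[OF p, of j n] j c
        by (simp add: mult_le_cancel_left1 mult.left_commute)
    qed (use False e in auto)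
    moreover have "real (c - k) \<le> 2 * L" using False k c L by (simp add: of_nat_diff)
    ultimately show ?thesis using that by blast
  qed
  have "(1 + e) ^ d \<le> exp (e * (2 * L))" by (rule one_plus_power_le_exp[OF e d(2)])
  also have "e * (2 * L) = 8 * L^2 / (real n * lam)" by (simp add: e_def power2_eq_square)
  finally show ?thesis
    using d(1) lift_ratio_pos[OF p c(1)] unfolding c_def
    by (meson mult_right_mono less_imp_le order_trans)
qed

section \<open>Density estimates\<close>

lemma lift_density_ge_central:
  assumes "0 < p" "p < 1" "x \<in> cube (2*n)" "even (weight x)"
  shows "lift_ratio p n (central_weight p n) * mu p (2*n) x \<le> lift_density p n x"
  unfolding lift_density_def
  using assms lift_ratio_central_le[of p "weight x div 2" n] weight_le[of x "2*n"] mu_nonneg[of p "2*n" x]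
  by (auto intro: mult_right_mono)

lemma lift_density_window_le:
  assumes lam: "0 < lam" "lam < p" "p < 1 - lam" and L: "1 \<le> L" "L \<le> real n * lam / 4"
    and x: "x \<in> cube (2*n)" and w: "\<bar>real (weight x div 2) - real n * p\<bar> \<le> L"
  shows "lift_density p n x
    \<le> exp (8 * L^2 / (real n * lam)) * lift_ratio p n (central_weight p n) * mu p (2*n) x"
proof -
  have "lift_ratio p n (weight x div 2)
      \<le> exp (8 * L^2 / (real n * lam)) * lift_ratio p n (central_weight p n)"
    by (rule lift_ratio_window_le[OF lam L]) (use weight_le[OF x] w in auto)
  moreover have "0 \<le> lift_ratio p n (central_weight p n)" "0 \<le> mu p (2*n) x"
    using lift_ratio_pos[of p "central_weight p n" n] central_weight_bounds(1)[of p n]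
      mu_nonneg[of p "2*n" x] lam by auto
  ultimately show ?thesis unfolding lift_density_def by (auto intro: mult_right_mono)
qed

lemma lift_ratio_central_le_inverse:
  assumes lam: "0 < lam" "lam < p" "p < 1 - lam" and n: "0 < n"
  shows "lift_ratio p n (central_weight p n) \<le> 1 / lam"
proof -
  have p: "0 < p" "p < 1" using lam by auto
  let ?g = "lift_ratio p n (central_weight p n)"
  let ?E = "{x\<in>cube (2*n). even (weight x)}"
  have "lam * (\<Sum>x\<in>cube (2*n). mu p (2*n) x * 1) \<le> (\<Sum>x\<in>?E. mu p (2*n) x * 1)"
    by (rule sum_even_weight_ge[OF lam, of 0]) (use n in auto)
  then have "lam * ?g \<le> ?g * (\<Sum>x\<in>?E. mu p (2*n) x)"
    using lift_ratio_pos[OF p central_weight_bounds(1)[OF p]] by (simp add: sum_mu)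
  also have "\<dots> \<le> (\<Sum>x\<in>?E. lift_density p n x)"
    unfolding sum_distrib_left by (intro sum_mono lift_density_ge_central[OF p]) auto
  also have "\<dots> \<le> (\<Sum>x\<in>cube (2*n). lift_density p n x)"
    by (intro sum_mono2) (auto simp: finite_cube lift_density_nonneg[OF p])
  finally have "lam * ?g \<le> 1" by (simp add: sum_lift_density[OF p])
  then show ?thesis using lam by (simp add: field_simps mult.commute)
qed

lemma lift_density_window_mass:
  assumes p: "0 < p" "p < 1" and L: "0 < L"
  shows "1 - real n / (4 * L^2)
    \<le> (\<Sum>x\<in>cube (2*n). lift_density p n x * of_bool (\<bar>real (weight x div 2) - real n * p\<bar> \<le> L))"
proof -
  have "(\<Sum>x\<in>cube (2*n). lift_density p n x * of_bool (\<bar>real (weight x div 2) - real n * p\<bar> \<le> L))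
      = (\<Sum>y\<in>cube n. mu p n y * (1 - of_bool (L < \<bar>real (weight y) - real n * p\<bar>)))"
    using sum_lift_density_weight[OF p, of n "\<lambda>k. of_bool (\<bar>real k - real n * p\<bar> \<le> L)"]
    by (simp add: not_less[symmetric] of_bool_not_iff)
  also have "\<dots> = 1 - (\<Sum>y\<in>cube n. mu p n y * of_bool (L < \<bar>real (weight y) - real n * p\<bar>))"
    by (simp add: right_diff_distrib sum_subtractf sum_mu)
  finally show ?thesis using chebyshev_weight[of p L n] p L by simp
qed

lemma lift_ratio_central_ge:
  assumes lam: "0 < lam" "lam < p" "p < 1 - lam"
    and n: "1 \<le> sqrt (real n)" "sqrt (real n) \<le> real n * lam / 4"
  shows "3/4 * exp (- 8 / lam) \<le> lift_ratio p n (central_weight p n)"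
proof -
  have p: "0 < p" "p < 1" using lam by auto
  let ?g = "lift_ratio p n (central_weight p n)"
  define L where "L = sqrt (real n)"
  have L: "1 \<le> L" "L \<le> real n * lam / 4" "L^2 = real n" "0 < real n" using n by (auto simp: L_def)
  have "3/4 = 1 - real n / (4 * L^2)" using L by simp
  also have "\<dots> \<le> (\<Sum>x\<in>cube (2*n). lift_density p n x * of_bool (\<bar>real (weight x div 2) - real n * p\<bar> \<le> L))"
    using L by (intro lift_density_window_mass[OF p]) auto
  also have "\<dots> \<le> (\<Sum>x\<in>cube (2*n). exp (8 / lam) * ?g * mu p (2*n) x)"
  proof (intro sum_mono)
    fix x assume x: "x \<in> cube (2*n)"
    have "0 \<le> exp (8 / lam) * ?g * mu p (2*n) x"
      using lift_ratio_pos[OF p central_weight_bounds(1)[OF p]] mu_nonneg[of p] p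
      by (intro mult_nonneg_nonneg) (auto simp: less_imp_le)
    then show "lift_density p n x * of_bool (\<bar>real (weight x div 2) - real n * p\<bar> \<le> L)
        \<le> exp (8 / lam) * ?g * mu p (2*n) x"
      using lift_density_window_le[OF lam L(1,2) x] L lam by auto
  qed
  also have "\<dots> = exp (8 / lam) * ?g" by (simp add: sum_mu flip: sum_distrib_left)
  finally show ?thesis by (simp add: exp_minus field_simps)
qed

section \<open>Partners and pivotal coordinates of minors\<close>

text \<open>For a map \<open>\<pi>\<close> compatible with \<open>x\<close>, the sum in \<open>mate_pivotal\<close> has exactly one term: the
  partner of \<open>i\<close> under \<open>\<pi>\<close>. Over all compatible maps the partner is uniform on the mates, which
  is how \<open>mate_average\<close> arises.\<close>

definition mate_pivotal ::
  "nat \<Rightarrow> nat \<Rightarrow> ((nat \<Rightarrow> bool) \<Rightarrow> bool) \<Rightarrow> (nat \<Rightarrow> bool) \<Rightarrow> (nat \<Rightarrow> nat) \<Rightarrow> real" where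
  "mate_pivotal n i f x \<pi> = (\<Sum>j\<in>mates n i x. of_bool (\<pi> j = \<pi> i) * of_bool (pivotal f (flip x i) j))"

definition mate_average :: "nat \<Rightarrow> nat \<Rightarrow> ((nat \<Rightarrow> bool) \<Rightarrow> bool) \<Rightarrow> (nat \<Rightarrow> bool) \<Rightarrow> real" where
  "mate_average n i f x =
     (\<Sum>j\<in>mates n i x. of_bool (pivotal f (flip x i) j)) / real (card (mates n i x))"

lemma sum_compatible_maps_mate_pivotal:
  assumes i: "i < 2*n"
  shows "(\<Sum>\<pi>\<in>compatible_maps n x. mate_pivotal n i f x \<pi>)
    = real (card (compatible_maps n x)) * mate_average n i f x"
proof (cases "mates n i x = {}")
  case False
  then obtain j0 where j0: "j0 \<in> mates n i x" by blast
  define P where "P = card (paired_maps n i x j0)"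
  have P: "card (paired_maps n i x j) = P" if "j \<in> mates n i x" for j
    using card_paired_maps_mono[OF i that j0] card_paired_maps_mono[OF i j0 that] by (simp add: P_def)
  have "(\<Sum>\<pi>\<in>compatible_maps n x. mate_pivotal n i f x \<pi>)
      = (\<Sum>j\<in>mates n i x. \<Sum>\<pi>\<in>compatible_maps n x. of_bool (\<pi> j = \<pi> i) * of_bool (pivotal f (flip x i) j))"
    unfolding mate_pivotal_def by (rule sum.swap)
  also have "\<dots> = (\<Sum>j\<in>mates n i x. real P * of_bool (pivotal f (flip x i) j))"
  proof (rule sum.cong[OF refl])
    fix j assume j: "j \<in> mates n i x"
    have "(\<Sum>\<pi>\<in>compatible_maps n x. of_bool (\<pi> j = \<pi> i) :: real) = real P"
      using P[OF j] by (simp add: paired_maps_def finite_compatible_maps Int_def)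
    then show "(\<Sum>\<pi>\<in>compatible_maps n x. of_bool (\<pi> j = \<pi> i) * of_bool (pivotal f (flip x i) j))
        = real P * (of_bool (pivotal f (flip x i) j) :: real)"
      by (simp only: sum_distrib_right[symmetric])
  qed
  also have "\<dots> = real P * (\<Sum>j\<in>mates n i x. of_bool (pivotal f (flip x i) j))"
    by (simp add: sum_distrib_left)
  also have "real P = real (card (compatible_maps n x)) / real (card (mates n i x))"
  proof -
    have "real (card (mates n i x)) * real P = real (card (compatible_maps n x))"
      using sum_card_paired_maps[OF i, of x] P by (simp flip: of_nat_mult)
    moreover have "0 < card (mates n i x)" using False finite_mates by (simp add: card_gt_0_iff)
    ultimately show ?thesis by (simp add: field_simps)
  qed
  finally show ?thesis by (simp add: mate_average_def)
qed (simp add: mate_pivotal_def mate_average_def)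

text \<open>Flipping coordinate \<open>\<pi> i\<close> of \<open>y\<close> flips both \<open>i\<close> and its partner in \<open>lift n \<pi> y\<close>;
  the triangle inequality for disagreements does the rest.\<close>

lemma pivotal_minor_ge:
  assumes \<pi>: "\<pi> \<in> two_to_one_maps n" and i: "i < 2*n" and y: "y \<in> cube n"
  shows "of_bool (pivotal f (lift n \<pi> y) i) - mate_pivotal n i f (lift n \<pi> y) \<pi>
    \<le> of_bool (pivotal (minor (2*n) f \<pi>) y (\<pi> i))"
proof -
  define x where "x = lift n \<pi> y"
  have "x \<in> lift n \<pi> ` cube n" using y by (simp add: x_def)
  then obtain j where j: "j \<in> mates n i x" and fiber: "\<And>l. l < 2*n \<Longrightarrow> \<pi> l = \<pi> i \<longleftrightarrow> l = i \<or> l = j"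
    using partner_in_mates[OF \<pi> i] by blast
  have "mates n i x \<inter> {l. \<pi> l = \<pi> i} = {j}" using j fiber by (auto simp: mates_def)
  then have "mate_pivotal n i f x \<pi> = of_bool (pivotal f (flip x i) j)"
    by (simp add: mate_pivotal_def finite_mates)
  moreover have "lift n \<pi> (flip y (\<pi> i)) = flip (flip x i) j"
  proof
    fix l show "lift n \<pi> (flip y (\<pi> i)) l = flip (flip x i) j l"
      using fiber[of l] j i by (cases "l < 2*n") (auto simp: lift_def flip_def x_def mates_def)
  qed
  ultimately show ?thesis by (auto simp: pivotal_def minor_eq_lift x_def[symmetric])
qed

lemma sum_minor_influence_ge_density:
  assumes lam: "0 < lam" "lam < p" "p < 1 - lam" and i: "i < 2*n"
  shows "lam^2 * real (card (two_to_one_maps n)) *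
      ((\<Sum>x\<in>cube (2*n). lift_density p n x * of_bool (pivotal f x i))
        - (\<Sum>x\<in>cube (2*n). lift_density p n x * mate_average n i f x))
    \<le> (\<Sum>\<pi>\<in>two_to_one_maps n. influence p n (bval (minor (2*n) f \<pi>)) (\<pi> i))"
proof -
  have p: "0 < p" "p < 1" using lam by auto
  let ?N = "real (card (two_to_one_maps n))"
  define A where "A = (\<Sum>x\<in>cube (2*n). lift_density p n x * of_bool (pivotal f x i))"
  define B where "B = (\<Sum>x\<in>cube (2*n). lift_density p n x * mate_average n i f x)"
  have "?N * A = (\<Sum>\<pi>\<in>two_to_one_maps n. \<Sum>y\<in>cube n. mu p n y * of_bool (pivotal f (lift n \<pi> y) i))"
    unfolding A_def by (rule sum_two_to_one_maps_lift_density[OF p, symmetric]) simp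
  moreover have "?N * B
      = (\<Sum>\<pi>\<in>two_to_one_maps n. \<Sum>y\<in>cube n. mu p n y * mate_pivotal n i f (lift n \<pi> y) \<pi>)"
    unfolding B_def by (rule sum_two_to_one_maps_lift_density[OF p, symmetric])
       (rule sum_compatible_maps_mate_pivotal[OF i])
  moreover have "lam^2 * ?N * (A - B) = lam^2 * (?N * A - ?N * B)" by (simp add: algebra_simps)
  ultimately have "lam^2 * ?N * (A - B)
    = (\<Sum>\<pi>\<in>two_to_one_maps n. lam^2 * (\<Sum>y\<in>cube n. mu p n y *
        (of_bool (pivotal f (lift n \<pi> y) i) - mate_pivotal n i f (lift n \<pi> y) \<pi>)))"
    by (simp add: right_diff_distrib sum_subtractf sum_distrib_left)
  also have "\<dots> \<le> (\<Sum>\<pi>\<in>two_to_one_maps n. lam^2 *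
      (\<Sum>y\<in>cube n. mu p n y * of_bool (pivotal (minor (2*n) f \<pi>) y (\<pi> i))))"
    using pivotal_minor_ge[OF _ i] mu_nonneg p
    by (intro sum_mono mult_left_mono) (auto simp: less_imp_le)
  also have "\<dots> \<le> (\<Sum>\<pi>\<in>two_to_one_maps n. influence p n (bval (minor (2*n) f \<pi>)) (\<pi> i))"
    by (intro sum_mono pivotal_le_influence[OF lam])
  finally show ?thesis unfolding A_def B_def .
qed

lemma lift_density_pivotal_ge:
  assumes lam: "0 < lam" "lam < p" "p < 1 - lam" and i: "i < 2*n"
  shows "lift_ratio p n (central_weight p n) * lam * influence p (2*n) (bval f) i
    \<le> (\<Sum>x\<in>cube (2*n). lift_density p n x * of_bool (pivotal f x i))"
proof -
  have p: "0 < p" "p < 1" using lam by auto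
  let ?g = "lift_ratio p n (central_weight p n)"
  let ?E = "{x\<in>cube (2*n). even (weight x)}"
  have g: "0 \<le> ?g" using lift_ratio_pos[OF p central_weight_bounds(1)[OF p]] by (simp add: less_imp_le)
  have "?g * lam * influence p (2*n) (bval f) i
      \<le> ?g * (lam * (\<Sum>x\<in>cube (2*n). mu p (2*n) x * of_bool (pivotal f x i)))"
    unfolding mult.assoc using g lam by (intro mult_left_mono influence_le_pivotal) auto
  also have "\<dots> \<le> ?g * (\<Sum>x\<in>?E. mu p (2*n) x * of_bool (pivotal f x i))"
    using g by (intro mult_left_mono sum_even_weight_ge[OF lam i]) simp_all
  also have "\<dots> \<le> (\<Sum>x\<in>?E. lift_density p n x * of_bool (pivotal f x i))"
    unfolding sum_distrib_left
    using lift_density_ge_central[OF p] by (intro sum_mono) (simp add: mult.assoc[symmetric] mult_right_mono)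
  also have "\<dots> \<le> (\<Sum>x\<in>cube (2*n). lift_density p n x * of_bool (pivotal f x i))"
    by (intro sum_mono2) (auto simp: finite_cube lift_density_nonneg[OF p])
  finally show ?thesis .
qed

lemma card_mates_ge:
  assumes lam: "0 < lam" "lam < p" "p < 1 - lam" and L: "2 * L + 1 \<le> real n * lam"
    and x: "x \<in> cube (2*n)" "even (weight x)" and i: "i < 2*n"
    and w: "\<bar>real (weight x div 2) - real n * p\<bar> \<le> L"
  shows "lam * real n \<le> real (card (mates n i x))"
proof -
  obtain k where k: "weight x = 2*k" using x(2) by blast
  have ones: "finite {j. x j}" "{j. x j} \<subseteq> {..<2*n}" using finite_ones[OF x(1)] cube_ones_subset[OF x(1)] .
  have np: "lam * real n \<le> real n * p" "lam * real n \<le> real n * (1 - p)"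
    using lam mult_right_mono[of lam p "real n"] mult_right_mono[of lam "1 - p" "real n"]
    by (auto simp: mult.commute)
  show ?thesis
  proof (cases "x i")
    case True
    then have "mates n i x = {j. x j} - {i}" using ones(2) by (auto simp: mates_def)
    moreover have "0 < card {j. x j}" using True ones(1) card_gt_0_iff by blast
    ultimately have "real (card (mates n i x)) = 2 * real k - 1"
      using True ones k by (simp add: weight_def of_nat_diff)
    then show ?thesis using w k np L by (simp add: algebra_simps)
  next
    case False
    then have "mates n i x = ({..<2*n} - {j. x j}) - {i}" using i by (auto simp: mates_def)
    moreover have "card ({..<2*n} - {j. x j}) = 2*n - 2*k" using ones k by (simp add: card_Diff_subset weight_def)
    moreover have "i \<in> {..<2*n} - {j. x j}" using False i by simp
    moreover have "{j. x j} \<subset> {..<2*n}" using ones(2) False i by auto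
    then have "2*k < 2*n" using psubset_card_mono[of "{..<2*n}" "{j. x j}"] k by (simp add: weight_def)
    ultimately have "real (card (mates n i x)) = 2 * real n - 2 * real k - 1"
      by (simp add: of_nat_diff)
    then show ?thesis using w k np L by (simp add: algebra_simps)
  qed
qed

lemma sum_mu_sensitivity_le:
  assumes lam: "0 < lam" "lam < p" "p < 1 - lam"
  shows "(\<Sum>x\<in>cube m. mu p m x * (\<Sum>j<m. of_bool (pivotal f x j)))
    \<le> total_influence p m (bval f) / lam^2"
proof -
  have "(\<Sum>x\<in>cube m. mu p m x * (\<Sum>j<m. of_bool (pivotal f x j)))
      = (\<Sum>j<m. \<Sum>x\<in>cube m. mu p m x * of_bool (pivotal f x j))"
    unfolding sum_distrib_left by (rule sum.swap)
  also have "\<dots> \<le> (\<Sum>j<m. influence p m (bval f) j / lam^2)"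
    using pivotal_le_influence[OF lam] lam by (intro sum_mono) (simp add: field_simps mult.commute)
  finally show ?thesis by (simp add: total_influence_def sum_divide_distrib)
qed

lemma mate_average_nonneg: "0 \<le> mate_average n i f x"
  unfolding mate_average_def by (simp add: sum_nonneg)

lemma mate_average_le_1: "mate_average n i f x \<le> 1"
proof (cases "mates n i x = {}")
  case False
  have "(\<Sum>j\<in>mates n i x. of_bool (pivotal f (flip x i) j)) \<le> real (card (mates n i x))"
    by (simp add: finite_mates card_mono)
  then show ?thesis
    using False by (simp add: mate_average_def finite_mates card_gt_0_iff divide_le_eq_1)
qed (simp add: mate_average_def)

lemma mate_average_le_sensitivity:
  assumes "0 < c" "c \<le> real (card (mates n i x))"
  shows "mate_average n i f x \<le> (\<Sum>j<2*n. of_bool (pivotal f (flip x i) j)) / c"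
proof -
  have "(\<Sum>j\<in>mates n i x. of_bool (pivotal f (flip x i) j)) \<le> (\<Sum>j<2*n. of_bool (pivotal f (flip x i) j) :: real)"
    by (intro sum_mono2) (auto simp: mates_def)
  moreover have "mate_average n i f x \<le> (\<Sum>j\<in>mates n i x. of_bool (pivotal f (flip x i) j)) / c"
    unfolding mate_average_def using assms by (intro divide_left_mono sum_nonneg) auto
  ultimately show ?thesis using assms(1) by (meson divide_right_mono less_imp_le order_trans)
qed

lemma lift_density_window_le_flip:
  assumes lam: "0 < lam" "lam < p" "p < 1 - lam" and L: "1 \<le> L" "L \<le> real n * lam / 4"
    and i: "i < 2*n" and x: "x \<in> cube (2*n)" and w: "\<bar>real (weight x div 2) - real n * p\<bar> \<le> L"
  shows "lam * lift_density p n x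
    \<le> exp (8 * L^2 / (real n * lam)) * lift_ratio p n (central_weight p n) * mu p (2*n) (flip x i)"
proof -
  have p: "0 < p" "p < 1" using lam by auto
  let ?G = "exp (8 * L^2 / (real n * lam)) * lift_ratio p n (central_weight p n)"
  have G: "0 \<le> ?G" using lift_ratio_pos[OF p central_weight_bounds(1)[OF p]]
    by (intro mult_nonneg_nonneg) (auto simp: less_imp_le)
  have "lam * mu p (2*n) x \<le> mu p (2*n) (flip x i)"
    using mu_flip_le[OF i lam, of "flip x i"] lam mu_nonneg[of p "2*n" "flip x i"]
    by (simp add: mult_left_le_one_le order_trans)
  then have "?G * (lam * mu p (2*n) x) \<le> ?G * mu p (2*n) (flip x i)" using G by (rule mult_left_mono)
  moreover have "lam * lift_density p n x \<le> lam * (?G * mu p (2*n) x)"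
    using lift_density_window_le[OF lam L x w] lam by (simp add: mult.assoc)
  ultimately show ?thesis by (simp add: ac_simps)
qed

lemma lift_density_mate_average_le:
  assumes lam: "0 < lam" "lam < p" "p < 1 - lam"
    and L: "1 \<le> L" "L \<le> real n * lam / 4" "2 * L + 1 \<le> real n * lam"
    and i: "i < 2*n" and x: "x \<in> cube (2*n)"
  shows "lift_density p n x * mate_average n i f x
    \<le> exp (8 * L^2 / (real n * lam)) * lift_ratio p n (central_weight p n) / (lam^2 * real n)
        * (mu p (2*n) (flip x i) * (\<Sum>j<2*n. of_bool (pivotal f (flip x i) j)))
      + lift_density p n x * of_bool (L < \<bar>real (weight x div 2) - real n * p\<bar>)"
proof -
  have p: "0 < p" "p < 1" using lam by auto
  let ?G = "exp (8 * L^2 / (real n * lam)) * lift_ratio p n (central_weight p n)"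
  let ?s = "\<Sum>j<2*n. of_bool (pivotal f (flip x i) j) :: real"
  have G: "0 \<le> ?G" using lift_ratio_pos[OF p central_weight_bounds(1)[OF p]]
    by (intro mult_nonneg_nonneg) (auto simp: less_imp_le)
  have ln: "0 < lam * real n" using L by (simp add: mult.commute)
  have mu: "0 \<le> mu p (2*n) (flip x i)" using mu_nonneg p by simp
  have rest: "0 \<le> ?G / (lam^2 * real n) * (mu p (2*n) (flip x i) * ?s)"
    using G mu ln by (simp add: sum_nonneg)
  consider (outside) "L < \<bar>real (weight x div 2) - real n * p\<bar>" | (odd) "odd (weight x)"
    | (window) "\<bar>real (weight x div 2) - real n * p\<bar> \<le> L" "even (weight x)" by linarith
  then show ?thesis
  proof cases
    case outside
    have "lift_density p n x * mate_average n i f x \<le> lift_density p n x"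
      by (rule mult_left_le[OF mate_average_le_1 lift_density_nonneg[OF p x]])
    moreover have "lift_density p n x * of_bool (L < \<bar>real (weight x div 2) - real n * p\<bar>)
        = lift_density p n x" using outside by simp
    ultimately show ?thesis using rest by linarith
  next
    case odd
    then show ?thesis using rest by (simp add: lift_density_def)
  next
    case window
    have "lift_density p n x \<le> ?G * (mu p (2*n) (flip x i) / lam)"
      using lift_density_window_le_flip[OF lam L(1,2) i x window(1)] lam by (simp add: field_simps)
    moreover have "mate_average n i f x \<le> ?s / (lam * real n)"
      using card_mates_ge[OF lam L(3) x window(2) i window(1)] ln by (intro mate_average_le_sensitivity) auto
    ultimately have "lift_density p n x * mate_average n i f x
        \<le> ?G * (mu p (2*n) (flip x i) / lam) * (?s / (lam * real n))"
      using G mu lam by (intro mult_mono mate_average_nonneg) auto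
    then show ?thesis using window(1) by (simp add: power2_eq_square field_simps)
  qed
qed

lemma sum_lift_density_mate_average_le:
  assumes lam: "0 < lam" "lam < p" "p < 1 - lam"
    and L: "1 \<le> L" "L \<le> real n * lam / 4" "2 * L + 1 \<le> real n * lam" and i: "i < 2*n"
  shows "(\<Sum>x\<in>cube (2*n). lift_density p n x * mate_average n i f x)
    \<le> exp (8 * L^2 / (real n * lam)) * lift_ratio p n (central_weight p n)
        * total_influence p (2*n) (bval f) / (lam^4 * real n)
      + real n / (4 * L^2)"
proof -
  have p: "0 < p" "p < 1" using lam by auto
  define c where "c = exp (8 * L^2 / (real n * lam)) * lift_ratio p n (central_weight p n) / (lam^2 * real n)"
  have c: "0 \<le> c"
    using lift_ratio_pos[OF p central_weight_bounds(1)[OF p]] lam by (simp add: c_def less_imp_le)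
  let ?s = "\<lambda>z. \<Sum>j<2*n. of_bool (pivotal f z j) :: real"
  have "(\<Sum>x\<in>cube (2*n). lift_density p n x * mate_average n i f x)
      \<le> (\<Sum>x\<in>cube (2*n). c * (mu p (2*n) (flip x i) * ?s (flip x i))
        + lift_density p n x * of_bool (L < \<bar>real (weight x div 2) - real n * p\<bar>))"
    unfolding c_def by (intro sum_mono lift_density_mate_average_le[OF lam L i])
  also have "\<dots> = c * (\<Sum>x\<in>cube (2*n). mu p (2*n) (flip x i) * ?s (flip x i))
        + (\<Sum>x\<in>cube (2*n). lift_density p n x * of_bool (L < \<bar>real (weight x div 2) - real n * p\<bar>))"
    by (simp only: sum.distrib sum_distrib_left[symmetric])
  finally have "(\<Sum>x\<in>cube (2*n). lift_density p n x * mate_average n i f x)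
      \<le> c * (\<Sum>x\<in>cube (2*n). mu p (2*n) (flip x i) * ?s (flip x i))
        + (\<Sum>x\<in>cube (2*n). lift_density p n x * of_bool (L < \<bar>real (weight x div 2) - real n * p\<bar>))" .
  moreover have "(\<Sum>x\<in>cube (2*n). mu p (2*n) (flip x i) * ?s (flip x i))
      \<le> total_influence p (2*n) (bval f) / lam^2"
    using sum_flip[OF i, of "\<lambda>z. mu p (2*n) z * ?s z"] sum_mu_sensitivity_le[OF lam] by simp
  moreover have "(\<Sum>x\<in>cube (2*n). lift_density p n x * of_bool (L < \<bar>real (weight x div 2) - real n * p\<bar>))
      \<le> real n / (4 * L^2)"
    using sum_lift_density_weight[OF p, of n "\<lambda>k. of_bool (L < \<bar>real k - real n * p\<bar>)"]
      chebyshev_weight[of p L n] p L by simp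
  moreover have "c * (total_influence p (2*n) (bval f) / lam^2)
      = exp (8 * L^2 / (real n * lam)) * lift_ratio p n (central_weight p n)
        * total_influence p (2*n) (bval f) / (lam^4 * real n)"
    by (simp add: c_def power_def)
  ultimately show ?thesis using mult_left_mono[OF _ c] by (smt (verit))
qed

lemma sum_minor_influence_ge_window:
  assumes lam: "0 < lam" "lam < p" "p < 1 - lam"
    and L: "1 \<le> L" "L \<le> real n * lam / 4" "2 * L + 1 \<le> real n * lam" and i: "i < 2*n"
  shows "lam^2 * real (card (two_to_one_maps n)) *
      (lift_ratio p n (central_weight p n) * lam * influence p (2*n) (bval f) i
        - exp (8 * L^2 / (real n * lam)) * lift_ratio p n (central_weight p n)
          * total_influence p (2*n) (bval f) / (lam^4 * real n)
        - real n / (4 * L^2))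
    \<le> (\<Sum>\<pi>\<in>two_to_one_maps n. influence p n (bval (minor (2*n) f \<pi>)) (\<pi> i))"
  using lift_density_pivotal_ge[OF lam i, of f] sum_lift_density_mate_average_le[OF lam L i, of f]
  by (intro order_trans[OF mult_left_mono sum_minor_influence_ge_density[OF lam i]]) auto

lemma window_width_bounds:
  assumes lam: "0 < lam" and T: "1 \<le> T" and n: "(4 * T / lam + 1)^2 \<le> real n"
  shows "1 \<le> sqrt (real n)" "T * sqrt (real n) \<le> real n * lam / 4"
    "2 * (T * sqrt (real n)) + 1 \<le> real n * lam"
proof -
  define s where "s = sqrt (real n)"
  have s: "4 * T / lam + 1 \<le> s" "real n = s * s"
    using real_sqrt_le_mono[OF n] T lam by (simp_all add: s_def)
  then have "4 * T + lam \<le> s * lam" using lam by (simp add: field_simps)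
  moreover have "0 \<le> 4 * T / lam" using T lam by simp
  ultimately have s1: "1 \<le> s" and "T \<le> s * lam / 4" "4 * T + lam \<le> s * lam"
    using s lam by auto
  have "T * s \<le> (s * lam / 4) * s"
    by (rule mult_right_mono) (use \<open>T \<le> s * lam / 4\<close> s1 in auto)
  then show "T * sqrt (real n) \<le> real n * lam / 4"
    using s1 unfolding s_def[symmetric] s(2) by (simp add: ac_simps)
  have "(4 * T + lam) * s \<le> (s * lam) * s"
    by (rule mult_right_mono) (use \<open>4 * T + lam \<le> s * lam\<close> s1 in auto)
  moreover have "1 \<le> T * s" using T s1 by (metis mult_mono' mult_1 zero_le_one order_trans)
  moreover have "0 \<le> lam * s" using lam s1 by simp
  ultimately have "2 * (T * s) + 1 \<le> lam * (s * s)" by (simp add: algebra_simps)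
  then show "2 * (T * sqrt (real n)) + 1 \<le> real n * lam"
    using s1 unfolding s_def[symmetric] s(2) by (simp add: ac_simps)
  show "1 \<le> sqrt (real n)" using s1 by (simp add: s_def)
qed

lemma sum_minor_influence_ge:
  assumes lam: "0 < lam" "lam < p" "p < 1 - lam"
    and T: "1 \<le> T" and n: "(4 * T / lam + 1)^2 \<le> real n" and i: "i < 2*n"
  shows "lam^2 * real (card (two_to_one_maps n)) *
      (3/4 * exp (- 8 / lam) * lam * influence p (2*n) (bval f) i
        - exp (8 * T^2 / lam) * total_influence p (2*n) (bval f) / (lam^5 * real n)
        - 1 / (4 * T^2))
    \<le> (\<Sum>\<pi>\<in>two_to_one_maps n. influence p n (bval (minor (2*n) f \<pi>)) (\<pi> i))"
proof -
  have p: "0 \<le> p" "p \<le> 1" using lam by auto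
  define L where "L = T * sqrt (real n)"
  note width = window_width_bounds[OF lam(1) T n, folded L_def]
  have L: "1 \<le> L" "L^2 = T^2 * real n" "0 < real n" "sqrt (real n) \<le> L"
    using width T mult_right_mono[OF T, of "sqrt (real n)"]
    by (auto simp: L_def power_mult_distrib mult_le_cancel_left1 order_trans)
  let ?g = "lift_ratio p n (central_weight p n)"
  let ?I = "influence p (2*n) (bval f) i" and ?TI = "total_influence p (2*n) (bval f)"
  have I: "0 \<le> ?I" "0 \<le> ?TI" using p by (simp_all add: influence_nonneg total_influence_nonneg)
  have "3/4 * exp (- 8 / lam) \<le> ?g"
    using width L(4) by (intro lift_ratio_central_ge[OF lam]) linarith+
  then have "3/4 * exp (- 8 / lam) * lam * ?I \<le> ?g * lam * ?I"
    using lam I by (intro mult_right_mono) auto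
  moreover have "?g \<le> 1 / lam" using lift_ratio_central_le_inverse[OF lam] i by simp
  then have "exp (8 * T^2 / lam) * ?g * ?TI / (lam^4 * real n)
      \<le> exp (8 * T^2 / lam) * (1 / lam) * ?TI / (lam^4 * real n)"
    using I lam by (intro divide_right_mono mult_right_mono mult_left_mono) auto
  moreover have "exp (8 * T^2 / lam) * (1 / lam) * ?TI / (lam^4 * real n)
      = exp (8 * T^2 / lam) * ?TI / (lam^5 * real n)"
    by (simp add: eval_nat_numeral)
  ultimately have "3/4 * exp (- 8 / lam) * lam * ?I - exp (8 * T^2 / lam) * ?TI / (lam^5 * real n)
        - 1 / (4 * T^2)
    \<le> ?g * lam * ?I - exp (8 * T^2 / lam) * ?g * ?TI / (lam^4 * real n) - 1 / (4 * T^2)"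
    by linarith
  then have "lam^2 * real (card (two_to_one_maps n)) * (3/4 * exp (- 8 / lam) * lam * ?I
        - exp (8 * T^2 / lam) * ?TI / (lam^5 * real n) - 1 / (4 * T^2))
    \<le> lam^2 * real (card (two_to_one_maps n)) * (?g * lam * ?I
        - exp (8 * T^2 / lam) * ?g * ?TI / (lam^4 * real n) - 1 / (4 * T^2))"
    by (rule mult_left_mono) simp
  also have "\<dots> \<le> (\<Sum>\<pi>\<in>two_to_one_maps n. influence p n (bval (minor (2*n) f \<pi>)) (\<pi> i))"
    using sum_minor_influence_ge_window[OF lam L(1) width(2,3) i, of f] L lam by simp
  finally show ?thesis .
qed

lemma fraction_ge_if_sum_ge:
  fixes I :: "'a \<Rightarrow> real"
  assumes S: "finite S" "S \<noteq> {}" and I: "\<And>x. x \<in> S \<Longrightarrow> I x \<le> 1" and t: "0 \<le> t"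
    and sum: "2 * t * real (card S) \<le> (\<Sum>x\<in>S. I x)"
  shows "t \<le> real (card {x\<in>S. t \<le> I x}) / real (card S)"
proof -
  have "(\<Sum>x\<in>S. I x) \<le> (\<Sum>x\<in>S. of_bool (t \<le> I x) + t)"
  proof (intro sum_mono)
    fix x assume "x \<in> S"
    then show "I x \<le> of_bool (t \<le> I x) + t" using I[of x] t by auto
  qed
  also have "\<dots> = real (card {x\<in>S. t \<le> I x}) + t * real (card S)"
    using S by (simp add: sum.distrib Int_def mult.commute)
  finally show ?thesis using sum S by (simp add: field_simps card_gt_0_iff)
qed

lemma fraction_influential_minors_ge:
  assumes lam: "0 < lam" "lam < p" "p < 1 - lam" and c: "0 < c"
    and T: "1 \<le> T" "1 \<le> c * T^2" and n: "(4 * T / lam + 1)^2 \<le> real n" and i: "i < 2*n"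
    and I: "c \<le> 3/4 * exp (- 8 / lam) * lam * influence p (2*n) (bval f) i"
    and TI: "exp (8 * T^2 / lam) * total_influence p (2*n) (bval f) \<le> c * lam^5 * real n / 4"
  shows "lam^2 * c / 4 \<le> real (card {\<pi> \<in> two_to_one_maps n.
      lam^2 * c / 4 \<le> influence p n (bval (minor (2*n) f \<pi>)) (\<pi> i)}) / real (card (two_to_one_maps n))"
proof (rule fraction_ge_if_sum_ge[OF finite_two_to_one_maps])
  have "exp (8 * T^2 / lam) * total_influence p (2*n) (bval f) / (lam^5 * real n) \<le> c / 4"
    using TI i lam by (simp add: field_simps)
  moreover have "1 / (4 * T^2) \<le> c / 4" using T by (simp add: field_simps)
  ultimately have "c / 2 \<le> 3/4 * exp (- 8 / lam) * lam * influence p (2*n) (bval f) i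
      - exp (8 * T^2 / lam) * total_influence p (2*n) (bval f) / (lam^5 * real n) - 1 / (4 * T^2)"
    using I by linarith
  then have "lam^2 * real (card (two_to_one_maps n)) * (c / 2) \<le> lam^2 * real (card (two_to_one_maps n))
      * (3/4 * exp (- 8 / lam) * lam * influence p (2*n) (bval f) i
        - exp (8 * T^2 / lam) * total_influence p (2*n) (bval f) / (lam^5 * real n) - 1 / (4 * T^2))"
    by (rule mult_left_mono) simp
  also have "\<dots> \<le> (\<Sum>\<pi>\<in>two_to_one_maps n. influence p n (bval (minor (2*n) f \<pi>)) (\<pi> i))"
    by (rule sum_minor_influence_ge[OF lam T(1) n i])
  finally show "2 * (lam^2 * c / 4) * real (card (two_to_one_maps n)) \<le> \<dots>" by (simp add: mult_ac)
qed (use card_two_to_one_maps_pos[of n] lam c in \<open>auto simp: card_gt_0_iff intro!: influence_le_1\<close>)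

theorem mainTheorem1:
  fixes lam \<delta> :: real
  assumes "0 < lam" and "lam < 1/2" and "0 < \<delta>"
  shows "\<exists>\<gamma>>0. \<exists>\<tau>>0. \<exists>n0::nat. \<forall>(p::real) (n::nat) (f::(nat \<Rightarrow> bool) \<Rightarrow> bool) (i::nat).
      lam < p \<longrightarrow> p < 1 - lam \<longrightarrow> n0 \<le> n \<longrightarrow>
      total_influence p (2*n) (bval f) \<le> \<gamma> * real n \<longrightarrow>
      i < 2*n \<longrightarrow> influence p (2*n) (bval f) i \<ge> \<delta> \<longrightarrow>
      real (card {\<pi> \<in> two_to_one_maps n.
                    influence p n (bval (minor (2*n) f \<pi>)) (\<pi> i) \<ge> \<tau>})
        / real (card (two_to_one_maps n)) \<ge> \<tau>"
proof -
  \<comment> \<open>\<open>c\<close> bounds the main term of \<open>sum_minor_influence_ge\<close> from below; \<open>T\<close> and \<open>\<gamma>\<close> make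
    each of the two error terms at most \<open>c / 4\<close>.\<close>
  define c where "c = 3/4 * exp (- 8 / lam) * lam * \<delta>"
  define T where "T = 1 + 1 / c"
  define \<gamma> where "\<gamma> = c * lam^5 / (4 * exp (8 * T^2 / lam))"
  have c: "0 < c" using assms by (simp add: c_def)
  then have T: "1 \<le> T" by (simp add: T_def)
  have "1 \<le> c * T" using c by (simp add: T_def field_simps)
  also have "\<dots> \<le> c * T^2" using c T by (simp add: power2_eq_square)
  finally have cT: "1 \<le> c * T^2" .
  have "lam^2 * c / 4 \<le> real (card {\<pi> \<in> two_to_one_maps n.
      lam^2 * c / 4 \<le> influence p n (bval (minor (2*n) f \<pi>)) (\<pi> i)}) / real (card (two_to_one_maps n))"
    if "lam < p" "p < 1 - lam" "nat \<lceil>(4 * T / lam + 1)^2\<rceil> \<le> n"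
      "total_influence p (2*n) (bval f) \<le> \<gamma> * real n" "i < 2*n" "\<delta> \<le> influence p (2*n) (bval f) i"
    for p n f i
  proof (rule fraction_influential_minors_ge[OF _ _ _ c T cT])
    show "(4 * T / lam + 1)^2 \<le> real n" using that(3) by (simp add: nat_le_iff ceiling_le_iff)
    show "c \<le> 3/4 * exp (- 8 / lam) * lam * influence p (2*n) (bval f) i"
      using that(6) assms by (simp add: c_def)
    show "exp (8 * T^2 / lam) * total_influence p (2*n) (bval f) \<le> c * lam^5 * real n / 4"
      using that(4) by (simp add: \<gamma>_def field_simps)
  qed (use that assms in auto)
  moreover have "0 < \<gamma>" "0 < lam^2 * c / 4" using c assms by (simp_all add: \<gamma>_def)
  ultimately show ?thesis by blast
qed

end
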